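(* Assume $\boldsymbol\Gamma$ is irreducible. Then the largest eigenvalue of $\boldsymbol\Theta-\boldsymbol\Psi$, denoted $-\mu$, is simple and admits a unit eigenvector $\mathbf W=(W_{jl})_{(j,l)\in\mathcal T_N}$ with all components strictly positive. Let $\mathbf S(z)=\exp\big((\boldsymbol\Theta-\boldsymbol\Psi)z\big)\mathbf S(0)$ with $\mathbf S(0)\in[0,\infty)^{\mathcal T_N}\setminus\{0\}$. Then, with $c_W=\sum_{(j,l)\in\mathcal T_N}W_{jl}S_{jl}(0)>0$, $$\mathbf S(z)=c_W\mathbf We^{-\mu z}\big(1+o(1)\big)\quad\text{as }z\to+\infty .$$ In particular, if $S_{jl}(0)=(2-\delta_{jl})q_jq_l$ for some $\mathbf q\in[0,\infty)^N\setminus\{0\}$ (the initial second moments $R_{jl}(0)=q_jq_l$), then $c_W=\sum_{j,l=0}^{N-1}W_{jl}q_jq_l$ (with $W_{jl}:=W_{lj}$ for $j>l$).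
   Context: Let $N\ge 2$. Let $\boldsymbol\Gamma=(\Gamma_{jl})_{j,l=0}^{N-1}$ be a real symmetric matrix with $\Gamma_{jl}\ge 0$ for $j\neq l$ and $\Gamma_{jj}=-\sum_{l\neq j}\Gamma_{jl}$. $\boldsymbol\Gamma$ is called irreducible if the graph on $\{0,\dots,N-1\}$ with an edge between $j\neq l$ whenever $\Gamma_{jl}>0$ is connected. Let $\Lambda_0,\dots,\Lambda_{N-1}\ge 0$. Let $\mathcal T_N=\{(j,l)\in\mathbb N^2:0\le j\le l\le N-1\}$. For $\mathbf S=(S_{jl})_{(j,l)\in\mathcal T_N}$ use the convention that $S_{jl}$ with $j>l$ means $S_{lj}$. Define linear maps on $\mathbb R^{\mathcal T_N}$ by $(\boldsymbol\Psi\mathbf S)_{jl}=(\Lambda_j+\Lambda_l)S_{jl}$ and $$(\boldsymbol\Theta\mathbf S)_{jl}=2\Gamma_{jl}\mathbf 1_{j\neq l}(S_{jj}+S_{ll}-2S_{jl})+\sum_{n\notin\{j,l\}}\big[\Gamma_{ln}(S_{jn}-S_{jl})+\Gamma_{jn}(S_{nl}-S_{jl})\big].$$ The vector $\mathbf S$ encodes second moments $R_{jl}=\mathbb E[P_jP_l]$ of mode powers via $S_{jl}=2R_{jl}$ for $j<l$ and $S_{jj}=R_{jj}$; $\mathbf S$ solves $\partial_z\mathbf S=(\boldsymbol\Theta-\boldsymbol\Psi)\mathbf S$. *)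

theory Defs
  imports "Jordan_Normal_Form.Char_Poly"
begin

definition TN :: "nat \<Rightarrow> (nat \<times> nat) set" where
  "TN N = {(j, l). j \<le> l \<and> l < N}"

text \<open>A fixed enumeration of T_N (used to turn vectors on T_N into matrices/vectors).\<close>
definition tn_list :: "nat \<Rightarrow> (nat \<times> nat) list" where
  "tn_list N = concat (map (\<lambda>l. map (\<lambda>j. (j, l)) [0..<Suc l]) [0..<N])"

definition sv :: "(nat \<times> nat \<Rightarrow> real) \<Rightarrow> nat \<Rightarrow> nat \<Rightarrow> real" where
  "sv S j l = (if j \<le> l then S (j, l) else S (l, j))"

definition Theta :: "nat \<Rightarrow> (nat \<Rightarrow> nat \<Rightarrow> real) \<Rightarrow> (nat \<times> nat \<Rightarrow> real) \<Rightarrow> (nat \<times> nat \<Rightarrow> real)" where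
  "Theta N \<Gamma> S = (\<lambda>(j, l).
     2 * \<Gamma> j l * (if j \<noteq> l then 1 else 0) * (sv S j j + sv S l l - 2 * sv S j l)
     + (\<Sum>n \<in> {0..<N} - {j, l}. \<Gamma> l n * (sv S j n - sv S j l) + \<Gamma> j n * (sv S n l - sv S j l)))"

definition Psi :: "(nat \<Rightarrow> real) \<Rightarrow> (nat \<times> nat \<Rightarrow> real) \<Rightarrow> (nat \<times> nat \<Rightarrow> real)" where
  "Psi \<Lambda> S = (\<lambda>(j, l). (\<Lambda> j + \<Lambda> l) * sv S j l)"

definition ThetaPsi :: "nat \<Rightarrow> (nat \<Rightarrow> nat \<Rightarrow> real) \<Rightarrow> (nat \<Rightarrow> real) \<Rightarrow> (nat \<times> nat \<Rightarrow> real) \<Rightarrow> (nat \<times> nat \<Rightarrow> real)" where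
  "ThetaPsi N \<Gamma> \<Lambda> S = (\<lambda>p. Theta N \<Gamma> S p - Psi \<Lambda> S p)"

definition ThetaPsi_mat :: "nat \<Rightarrow> (nat \<Rightarrow> nat \<Rightarrow> real) \<Rightarrow> (nat \<Rightarrow> real) \<Rightarrow> real mat" where
  "ThetaPsi_mat N \<Gamma> \<Lambda> = (let ts = tn_list N; n = length ts in
     mat n n (\<lambda>(a, b). ThetaPsi N \<Gamma> \<Lambda> (\<lambda>p. if p = ts ! b then 1 else 0) (ts ! a)))"

definition vec_of_TN :: "nat \<Rightarrow> (nat \<times> nat \<Rightarrow> real) \<Rightarrow> real vec" where
  "vec_of_TN N S = vec (length (tn_list N)) (\<lambda>i. S (tn_list N ! i))"

definition mexp_apply :: "real mat \<Rightarrow> real \<Rightarrow> real vec \<Rightarrow> real vec" where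
  "mexp_apply A z v = vec (dim_row A) (\<lambda>i. \<Sum>k. z ^ k / fact k * ((A ^\<^sub>m k) *\<^sub>v v) $ i)"

definition irreducible_Gamma :: "nat \<Rightarrow> (nat \<Rightarrow> nat \<Rightarrow> real) \<Rightarrow> bool" where
  "irreducible_Gamma N \<Gamma> = (\<forall>j<N. \<forall>l<N.
     (j, l) \<in> {(a, b). a < N \<and> b < N \<and> a \<noteq> b \<and> \<Gamma> a b > 0}\<^sup>*)"

end

theory Submission
  imports Defs
begin

text \<open>
  The matrix of \<Theta> - \<Psi> in the standard basis of the coordinates indexed by T_N is symmetric:
  the pairing of T with (\<Theta> - \<Psi>) S is a bilinear form in the symmetric matrices sv S and sv T
  which becomes visibly symmetric once each diagonal entry of \<Gamma> is replaced by minus its row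
  sum. Its off-diagonal entries are nonnegative, and an edge y -- m of \<Gamma> yields a positive
  entry between the pairs {x, y} and {x, m}, so irreducibility of \<Gamma> makes the matrix
  irreducible. A symmetric irreducible Metzler matrix has an orthonormal eigenbasis; for a unit
  eigenvector u of the largest eigenvalue, |u| has at least the same Rayleigh quotient, so it is
  again an eigenvector, and it is positive. Hence that eigenvalue -\<mu> is simple with a positive
  eigenvector W. Expanding exp((\<Theta> - \<Psi>) z) S(0) in the eigenbasis, all other modes decay
  faster than exp(-\<mu> z), and the coefficient of the surviving mode is c_W > 0.
\<close>

section \<open>Square matrices as functions\<close>

text \<open>An n \<times> n matrix is a function \<open>nat \<Rightarrow> nat \<Rightarrow> real\<close> whose entries at indices \<open>\<ge> n\<close> are
  irrelevant; \<open>meq n\<close> is equality of the relevant entries.\<close>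

definition mmul :: "nat \<Rightarrow> (nat \<Rightarrow> nat \<Rightarrow> real) \<Rightarrow> (nat \<Rightarrow> nat \<Rightarrow> real) \<Rightarrow> nat \<Rightarrow> nat \<Rightarrow> real"
  where "mmul n X Y = (\<lambda>i j. \<Sum>k<n. X i k * Y k j)"

definition mtr :: "(nat \<Rightarrow> nat \<Rightarrow> real) \<Rightarrow> nat \<Rightarrow> nat \<Rightarrow> real"
  where "mtr X = (\<lambda>i j. X j i)"

definition mone :: "nat \<Rightarrow> nat \<Rightarrow> real"
  where "mone = (\<lambda>i j. if i = j then 1 else 0)"

definition mdiag :: "(nat \<Rightarrow> real) \<Rightarrow> nat \<Rightarrow> nat \<Rightarrow> real"
  where "mdiag d = (\<lambda>i j. if i = j then d i else 0)"

definition meq :: "nat \<Rightarrow> (nat \<Rightarrow> nat \<Rightarrow> real) \<Rightarrow> (nat \<Rightarrow> nat \<Rightarrow> real) \<Rightarrow> bool"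
  where "meq n X Y \<longleftrightarrow> (\<forall>i<n. \<forall>j<n. X i j = Y i j)"

definition mapply :: "nat \<Rightarrow> (nat \<Rightarrow> nat \<Rightarrow> real) \<Rightarrow> (nat \<Rightarrow> real) \<Rightarrow> nat \<Rightarrow> real"
  where "mapply n a x = (\<lambda>i. \<Sum>j<n. a i j * x j)"

definition mat_of :: "nat \<Rightarrow> (nat \<Rightarrow> nat \<Rightarrow> real) \<Rightarrow> real mat"
  where "mat_of n X = mat n n (\<lambda>(i, j). X i j)"

lemma mmul_assoc: "mmul n (mmul n X Y) Z = mmul n X (mmul n Y Z)"
  unfolding mmul_def
  by (auto simp: sum_distrib_left sum_distrib_right mult.assoc intro!: ext sum.swap)

lemma mtr_mmul: "mtr (mmul n X Y) = mmul n (mtr Y) (mtr X)"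
  unfolding mmul_def mtr_def by (auto simp: mult.commute intro!: ext)

lemma meq_refl [simp]: "meq n X X"
  and meq_sym: "meq n X Y \<Longrightarrow> meq n Y X"
  and meq_trans: "meq n X Y \<Longrightarrow> meq n Y Z \<Longrightarrow> meq n X Z"
  unfolding meq_def by simp_all

lemmas [trans] = meq_trans

lemma meqD: "meq n X Y \<Longrightarrow> i < n \<Longrightarrow> j < n \<Longrightarrow> X i j = Y i j"
  unfolding meq_def by blast

lemma meq_mmul: "meq n X X' \<Longrightarrow> meq n Y Y' \<Longrightarrow> meq n (mmul n X Y) (mmul n X' Y')"
  unfolding meq_def mmul_def by (auto intro!: sum.cong)

lemma meq_mmul_left: "meq n Y Y' \<Longrightarrow> meq n (mmul n X Y) (mmul n X Y')"
  and meq_mmul_right: "meq n X X' \<Longrightarrow> meq n (mmul n X Y) (mmul n X' Y)"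
  by (simp_all add: meq_mmul)

lemma mmul_mone_left: "meq n (mmul n mone X) X"
  unfolding meq_def mmul_def mone_def by (simp add: if_distrib[of "\<lambda>x. x * _"] sum.delta cong: if_cong)

lemma mone_mult [simp]: "mone i j * x = (if i = j then x else 0)"
  and mult_mone [simp]: "x * mone i j = (if i = j then x else 0)"
  unfolding mone_def by simp_all

lemma mmul_mdiag: "mmul n X (mdiag d) i j = (if j < n then X i j * d j else 0)"
  unfolding mmul_def mdiag_def by (auto simp: if_distrib sum.delta' cong: if_cong)

lemma mat_of_carrier [simp]: "mat_of n X \<in> carrier_mat n n"
  unfolding mat_of_def by simp

lemma mat_of_mmul: "mat_of n (mmul n X Y) = mat_of n X * mat_of n Y"
  unfolding mat_of_def mmul_def
  by (rule eq_matI) (auto simp: scalar_prod_def lessThan_atLeast0)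

lemma mat_of_mone: "mat_of n mone = 1\<^sub>m n"
  unfolding mat_of_def mone_def by (rule eq_matI) auto

lemma mat_of_mdiag: "mat_of n (mdiag d) = mat n n (\<lambda>(i, j). if i = j then d i else 0)"
  unfolding mat_of_def mdiag_def by (rule eq_matI) auto

lemma mat_of_eq_iff: "mat_of n X = mat_of n Y \<longleftrightarrow> meq n X Y"
proof
  assume "mat_of n X = mat_of n Y"
  then show "meq n X Y"
    unfolding meq_def mat_of_def by (metis (no_types, lifting) index_mat(1) old.prod.case)
qed (auto simp: mat_of_def meq_def intro!: eq_matI)

lemma mat_of_mult_vec: "i < n \<Longrightarrow> (mat_of n X *\<^sub>v vec n y) $ i = (\<Sum>j<n. X i j * y j)"
  unfolding mat_of_def by (simp add: scalar_prod_def lessThan_atLeast0)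

definition sym_mat :: "nat \<Rightarrow> (nat \<Rightarrow> nat \<Rightarrow> real) \<Rightarrow> bool"
  where "sym_mat n a \<longleftrightarrow> (\<forall>i<n. \<forall>j<n. a i j = a j i)"

definition orth_mat :: "nat \<Rightarrow> (nat \<Rightarrow> nat \<Rightarrow> real) \<Rightarrow> bool"
  where "orth_mat n U \<longleftrightarrow> meq n (mmul n (mtr U) U) mone"

lemma sym_mat_iff_meq: "sym_mat n a \<longleftrightarrow> meq n (mtr a) a"
  unfolding sym_mat_def meq_def mtr_def by auto

lemma orth_mat_mmul_mtr:
  assumes "orth_mat n U"
  shows "meq n (mmul n U (mtr U)) mone"
proof -
  have "mat_of n (mtr U) * mat_of n U = 1\<^sub>m n"
    using assms unfolding orth_mat_def mat_of_eq_iff[symmetric] mat_of_mmul mat_of_mone .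
  then have "mat_of n U * mat_of n (mtr U) = 1\<^sub>m n"
    by (rule mat_mult_left_right_inverse[rotated 2]) auto
  then show ?thesis unfolding mat_of_eq_iff[symmetric] mat_of_mmul mat_of_mone .
qed

section \<open>The spectral theorem for real symmetric matrices\<close>

lemma sym_mat_eigenvalue_real:
  fixes z :: "nat \<Rightarrow> complex"
  assumes sym: "sym_mat n a"
    and eig: "\<And>i. i < n \<Longrightarrow> (\<Sum>j<n. of_real (a i j) * z j) = e * z i"
    and nz: "i0 < n" "z i0 \<noteq> 0"
  shows "Im e = 0"
proof -
  define Q where "Q = (\<Sum>i<n. cnj (z i) * (\<Sum>j<n. of_real (a i j) * z j))"
  define s where "s = (\<Sum>i<n. (cmod (z i))\<^sup>2)"
  have "s > 0"
    unfolding s_def by (rule sum_pos2[of _ i0]) (use nz in auto)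
  have "Q = (\<Sum>i<n. e * (cnj (z i) * z i))"
    unfolding Q_def by (rule sum.cong) (auto simp: eig)
  also have "\<dots> = e * of_real s"
    unfolding s_def of_real_sum sum_distrib_left
    by (rule sum.cong[OF refl]) (metis complex_norm_square mult.commute)
  finally have Q: "Q = e * of_real s" .
  have "cnj Q = (\<Sum>i<n. \<Sum>j<n. z i * (of_real (a i j) * cnj (z j)))"
    unfolding Q_def by (simp add: sum_distrib_left)
  also have "\<dots> = (\<Sum>j<n. \<Sum>i<n. z i * (of_real (a i j) * cnj (z j)))"
    by (rule sum.swap)
  also have "\<dots> = Q"
    unfolding Q_def sum_distrib_left using sym unfolding sym_mat_def
    by (intro sum.cong refl) (auto simp: mult_ac)
  finally have "Im Q = 0"
    by (metis cnj.simps(2) complex.expand neg_equal_zero)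
  then show ?thesis
    using \<open>s > 0\<close> unfolding Q by simp
qed

lemma eigenvector_normalize:
  fixes t :: "nat \<Rightarrow> real"
  assumes "i0 < n" "t i0 \<noteq> 0"
    and eig: "\<And>i. i < n \<Longrightarrow> mapply n a t i = l * t i"
  shows "\<exists>v. (\<Sum>i<n. (v i)\<^sup>2) = 1 \<and> (\<forall>i<n. mapply n a v i = l * v i)"
proof (intro exI conjI allI impI)
  define r where "r = (\<Sum>i<n. (t i)\<^sup>2)"
  have "r > 0"
    unfolding r_def by (rule sum_pos2[of _ i0]) (use assms(1,2) in auto)
  show "(\<Sum>i<n. (t i / sqrt r)\<^sup>2) = 1"
    using \<open>r > 0\<close> by (simp add: power_divide sum_divide_distrib[symmetric] r_def[symmetric])
  show "mapply n a (\<lambda>j. t j / sqrt r) i = l * (t i / sqrt r)" if "i < n" for i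
    using eig[OF that] by (simp add: mapply_def sum_divide_distrib[symmetric])
qed

lemma sym_mat_complex_eigenvalue:
  assumes sym: "sym_mat n a" and ev: "eigenvalue (map_mat complex_of_real (mat_of n a)) e"
  shows "Im e = 0" and "\<exists>t i0. i0 < n \<and> t i0 \<noteq> 0 \<and> (\<forall>i<n. mapply n a t i = Re e * t i)"
proof -
  let ?M = "map_mat complex_of_real (mat_of n a)"
  have dim: "dim_row ?M = n"
    by (simp add: mat_of_def)
  from ev obtain z where "eigenvector ?M z e"
    unfolding eigenvalue_def by blast
  then have z: "z \<in> carrier_vec n" "z \<noteq> 0\<^sub>v n" "?M *\<^sub>v z = e \<cdot>\<^sub>v z"
    unfolding eigenvector_def dim by blast+
  have eig: "(\<Sum>j<n. of_real (a i j) * z $ j) = e * z $ i" if "i < n" for i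
    using arg_cong[OF z(3), of "\<lambda>x. x $ i"] z(1) that
    by (simp add: mat_of_def scalar_prod_def lessThan_atLeast0)
  obtain i0 where i0: "i0 < n" "z $ i0 \<noteq> 0"
    using z(1,2) by (metis carrier_vecD eq_vecI index_zero_vec)
  show "Im e = 0"
    by (rule sym_mat_eigenvalue_real[OF sym eig i0])
  then have re: "mapply n a (\<lambda>j. Re (z $ j)) i = Re e * Re (z $ i)"
    and im: "mapply n a (\<lambda>j. Im (z $ j)) i = Re e * Im (z $ i)" if "i < n" for i
    using arg_cong[OF eig[OF that], of Re] arg_cong[OF eig[OF that], of Im]
    unfolding mapply_def by simp_all
  show "\<exists>t i0. i0 < n \<and> t i0 \<noteq> 0 \<and> (\<forall>i<n. mapply n a t i = Re e * t i)"
  proof (cases "Re (z $ i0) = 0")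
    case True
    then have "Im (z $ i0) \<noteq> 0"
      using i0(2) complex_eqI by force
    with i0(1) im show ?thesis
      by (intro exI[of _ "\<lambda>j. Im (z $ j)"] exI[of _ i0]) simp
  next
    case False
    with i0(1) re show ?thesis
      by (intro exI[of _ "\<lambda>j. Re (z $ j)"] exI[of _ i0]) simp
  qed
qed

lemma sym_mat_eigenvector_exists:
  assumes "0 < n" and sym: "sym_mat n a"
  shows "\<exists>v l. (\<Sum>i<n. (v i)\<^sup>2) = 1 \<and> (\<forall>i<n. mapply n a v i = l * v i)"
proof -
  let ?M = "map_mat complex_of_real (mat_of n a)"
  have M: "?M \<in> carrier_mat n n"
    by (simp add: mat_of_def)
  obtain es where cp: "char_poly ?M = (\<Prod>e\<leftarrow>es. [:- e, 1:])" and "length es = n"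
    using char_poly_factorized[OF M] by blast
  with \<open>0 < n\<close> have "poly (char_poly ?M) (es ! 0) = 0"
    unfolding cp by (induct es) (auto simp: poly_prod_list)
  then have "eigenvalue ?M (es ! 0)"
    using eigenvalue_root_char_poly[OF M] by simp
  then obtain t i0 where "i0 < n" "t i0 \<noteq> 0" "\<forall>i<n. mapply n a t i = Re (es ! 0) * t i"
    using sym_mat_complex_eigenvalue(2)[OF sym] by blast
  then show ?thesis
    using eigenvector_normalize[of i0 n t a] by blast
qed

text \<open>The reflection exchanging the first unit vector and the unit vector \<open>v\<close>. For \<open>v = e\<^sub>0\<close> the
  denominator vanishes and, since \<open>x / 0 = 0\<close>, it is the identity, which is still what is needed.\<close>

definition householder :: "nat \<Rightarrow> (nat \<Rightarrow> real) \<Rightarrow> nat \<Rightarrow> nat \<Rightarrow> real" where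
  "householder n v =
     (let w = (\<lambda>i. v i - mone i 0) in (\<lambda>i j. mone i j - 2 / (\<Sum>k<n. (w k)\<^sup>2) * w i * w j))"

lemma householder_sym: "mtr (householder n v) = householder n v"
  unfolding householder_def mtr_def mone_def Let_def by (auto intro!: ext)

lemma householder_orth:
  "orth_mat n (householder n v)"
proof -
  define w where "w i = v i - mone i 0" for i
  define q where "q = (\<Sum>k<n. (w k)\<^sup>2)"
  define c where "c = 2 / q"
  have H: "householder n v = (\<lambda>i j. mone i j - c * w i * w j)"
    unfolding householder_def w_def c_def q_def by simp
  have cq: "c * c * q = 2 * c"
    unfolding c_def by (cases "q = 0") (auto simp: field_simps power2_eq_square)
  have "mmul n (householder n v) (householder n v) i j = mone i j" if "i < n" "j < n" for i j
  proof -
    have "mmul n (householder n v) (householder n v) i j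
        = (\<Sum>k<n. mone i k * mone k j) - (\<Sum>k<n. mone i k * (c * w k * w j))
          - (\<Sum>k<n. c * w i * w k * mone k j) + (\<Sum>k<n. c * c * w i * w j * (w k)\<^sup>2)"
      unfolding mmul_def H sum_subtractf[symmetric] sum.distrib[symmetric]
      by (intro sum.cong) (auto simp: algebra_simps power2_eq_square)
    also have "\<dots> = mone i j - 2 * c * w i * w j + c * c * q * w i * w j"
      using that by (simp add: sum.delta sum.delta' q_def flip: sum_distrib_left; simp add: algebra_simps)
    finally show ?thesis
      by (simp add: cq)
  qed
  then show ?thesis
    unfolding orth_mat_def householder_sym meq_def by blast
qed

lemma householder_col0:
  assumes "(\<Sum>i<n. (v i)\<^sup>2) = 1" and "i < n"
  shows "householder n v i 0 = v i"
proof -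
  define w where "w i = v i - mone i 0" for i
  define q where "q = (\<Sum>k<n. (w k)\<^sup>2)"
  have H: "householder n v i 0 = mone i 0 - 2 / q * w i * w 0"
    unfolding householder_def w_def q_def by simp
  have "q = (\<Sum>k<n. (v k)\<^sup>2 - 2 * (if k = 0 then v k else 0) + mone k 0)"
    unfolding q_def w_def mone_def by (intro sum.cong) (auto simp: power2_eq_square algebra_simps)
  also have "\<dots> = 2 - 2 * v 0"
    using assms by (simp add: sum.distrib sum_subtractf sum_distrib_left[symmetric] mone_def)
  finally have q: "q = 2 - 2 * v 0" .
  show ?thesis
  proof (cases "q = 0")
    case True
    then have "w i = 0"
      using assms(2) sum_nonneg_eq_0_iff[of "{..<n}" "\<lambda>k. (w k)\<^sup>2"] unfolding q_def by auto
    then show ?thesis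
      using True H unfolding w_def by simp
  next
    case False
    then have "2 / q * w 0 = -1"
      using q unfolding w_def mone_def by (simp add: field_simps)
    then have "householder n v i 0 = mone i 0 + w i"
      unfolding H by (metis mult.commute mult.left_commute mult_minus1 diff_minus_eq_add)
    then show ?thesis
      unfolding w_def by simp
  qed
qed

lemma householder_deflation:
  assumes sym: "sym_mat n a" and v1: "(\<Sum>i<n. (v i)\<^sup>2) = 1"
    and ev: "\<And>i. i < n \<Longrightarrow> mapply n a v i = l * v i"
  defines "C \<equiv> mmul n (mmul n (householder n v) a) (householder n v)"
  shows "sym_mat n C" and "\<And>r. r < n \<Longrightarrow> C r 0 = (if r = 0 then l else 0)"
proof -
  let ?H = "householder n v"
  have "mtr C = mmul n ?H (mmul n (mtr a) ?H)"
    unfolding C_def mtr_mmul householder_sym mmul_assoc ..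
  moreover have "meq n (mtr a) a"
    using sym by (simp add: sym_mat_iff_meq)
  ultimately show "sym_mat n C"
    unfolding sym_mat_iff_meq C_def mmul_assoc by (simp add: meq_mmul_left meq_mmul_right)
  fix r assume r: "r < n"
  have "C r 0 = (\<Sum>k<n. ?H r k * (\<Sum>j<n. a k j * ?H j 0))"
    unfolding C_def mmul_assoc by (simp add: mmul_def)
  also have "\<dots> = (\<Sum>k<n. ?H r k * (l * ?H k 0))"
  proof (intro sum.cong refl)
    fix k assume "k \<in> {..<n}"
    have "(\<Sum>j<n. a k j * ?H j 0) = (\<Sum>j<n. a k j * v j)"
      by (intro sum.cong refl) (simp add: householder_col0[OF v1])
    then show "?H r k * (\<Sum>j<n. a k j * ?H j 0) = ?H r k * (l * ?H k 0)"
      using \<open>k \<in> {..<n}\<close> ev[of k] by (simp add: mapply_def householder_col0[OF v1])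
  qed
  also have "\<dots> = l * mmul n ?H ?H r 0"
    unfolding mmul_def sum_distrib_left by (simp add: mult_ac)
  also have "\<dots> = l * mone r 0"
    using householder_orth[of n v] r unfolding orth_mat_def householder_sym
    by (simp add: meqD)
  finally show "C r 0 = (if r = 0 then l else 0)"
    by (simp add: mone_def)
qed

definition diagonalizes :: "nat \<Rightarrow> (nat \<Rightarrow> nat \<Rightarrow> real) \<Rightarrow> (nat \<Rightarrow> nat \<Rightarrow> real) \<Rightarrow> (nat \<Rightarrow> real) \<Rightarrow> bool"
  where "diagonalizes n a U d \<longleftrightarrow> orth_mat n U \<and> meq n (mmul n a U) (mmul n U (mdiag d))"

definition extend_mat :: "(nat \<Rightarrow> nat \<Rightarrow> real) \<Rightarrow> nat \<Rightarrow> nat \<Rightarrow> real"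
  where "extend_mat U i j = (if i = 0 \<or> j = 0 then mone i j else U (i - 1) (j - 1))"

lemma orth_mat_extend_mat:
  assumes "orth_mat m U"
  shows "orth_mat (Suc m) (extend_mat U)"
  unfolding orth_mat_def meq_def
proof (intro allI impI)
  fix i j assume "i < Suc m" "j < Suc m"
  have "mmul (Suc m) (mtr (extend_mat U)) (extend_mat U) i j
      = extend_mat U 0 i * extend_mat U 0 j + (\<Sum>p<m. extend_mat U (Suc p) i * extend_mat U (Suc p) j)"
    unfolding mmul_def mtr_def sum.lessThan_Suc_shift by simp
  also have "\<dots> = mone i j"
  proof (cases "i = 0 \<or> j = 0")
    case False
    with \<open>i < Suc m\<close> \<open>j < Suc m\<close> have "i - 1 < m" "j - 1 < m"
      by auto
    with False have "(\<Sum>p<m. extend_mat U (Suc p) i * extend_mat U (Suc p) j) = mone (i - 1) (j - 1)"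
      using meqD[OF assms[unfolded orth_mat_def]] by (simp add: extend_mat_def mmul_def mtr_def)
    with False show ?thesis
      by (auto simp: extend_mat_def mone_def)
  qed (auto simp: extend_mat_def mone_def)
  finally show "mmul (Suc m) (mtr (extend_mat U)) (extend_mat U) i j = mone i j" .
qed

lemma diagonalizes_extend_mat:
  assumes sym: "sym_mat (Suc m) C" and col0: "\<And>r. r < Suc m \<Longrightarrow> C r 0 = (if r = 0 then l else 0)"
    and diag: "diagonalizes m (\<lambda>i j. C (Suc i) (Suc j)) U d"
  shows "diagonalizes (Suc m) C (extend_mat U) (\<lambda>j. if j = 0 then l else d (j - 1))"
proof -
  let ?V = "extend_mat U" and ?d = "\<lambda>j. if j = 0 then l else d (j - 1)"
  have row0: "C 0 (Suc s) = 0" if "s < m" for s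
    using sym col0[of "Suc s"] that unfolding sym_mat_def by fastforce
  have "mmul (Suc m) C ?V r k = ?V r k * ?d k" if "r < Suc m" "k < Suc m" for r k
  proof -
    have "mmul (Suc m) C ?V r k = C r 0 * ?V 0 k + (\<Sum>s<m. C r (Suc s) * ?V (Suc s) k)"
      unfolding mmul_def sum.lessThan_Suc_shift by simp
    also have "\<dots> = ?V r k * ?d k"
    proof (cases "k = 0 \<or> r = 0")
      case True
      then show ?thesis
        using col0[OF \<open>r < Suc m\<close>] row0 by (auto simp: extend_mat_def mone_def)
    next
      case False
      then have "(\<Sum>s<m. C r (Suc s) * ?V (Suc s) k) = mmul m (\<lambda>i j. C (Suc i) (Suc j)) U (r - 1) (k - 1)"
        by (simp add: mmul_def extend_mat_def)
      also have "\<dots> = U (r - 1) (k - 1) * d (k - 1)"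
      proof -
        from False that have "r - 1 < m" "k - 1 < m"
          by auto
        with diag show ?thesis
          unfolding diagonalizes_def by (auto dest: meqD simp: mmul_mdiag)
      qed
      finally show ?thesis
        using False by (simp add: extend_mat_def)
    qed
    finally show ?thesis .
  qed
  then show ?thesis
    using orth_mat_extend_mat diag unfolding diagonalizes_def meq_def by (simp add: mmul_mdiag)
qed

lemma diagonalizes_conj:
  assumes "mtr H = H" and H: "orth_mat n H"
    and diag: "diagonalizes n (mmul n (mmul n H a) H) V d"
  shows "diagonalizes n a (mmul n H V) d"
proof -
  have HH: "meq n (mmul n H H) mone"
    using H \<open>mtr H = H\<close> unfolding orth_mat_def by simp
  have cancel: "meq n (mmul n H (mmul n H X)) X" for X
    unfolding mmul_assoc[symmetric] by (rule meq_trans[OF meq_mmul_right[OF HH] mmul_mone_left])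
  have "mmul n (mtr (mmul n H V)) (mmul n H V) = mmul n (mtr V) (mmul n H (mmul n H V))"
    unfolding mtr_mmul \<open>mtr H = H\<close> mmul_assoc ..
  then have orth: "orth_mat n (mmul n H V)"
    using diag meq_trans[OF meq_mmul_left[OF cancel]] unfolding diagonalizes_def orth_mat_def by metis
  have "meq n (mmul n a (mmul n H V)) (mmul n H (mmul n H (mmul n a (mmul n H V))))"
    by (rule meq_sym[OF cancel])
  also have "mmul n H (mmul n H (mmul n a (mmul n H V))) = mmul n H (mmul n (mmul n (mmul n H a) H) V)"
    by (simp add: mmul_assoc)
  also have "meq n \<dots> (mmul n H (mmul n V (mdiag d)))"
    using diag unfolding diagonalizes_def by (rule meq_mmul_left[OF conjunct2])
  finally have "meq n (mmul n a (mmul n H V)) (mmul n (mmul n H V) (mdiag d))"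
    by (simp add: mmul_assoc)
  with orth show ?thesis
    unfolding diagonalizes_def by blast
qed

lemma diagonalizes_scale_col:
  assumes "diagonalizes n a U d" and "c * c = 1"
  shows "diagonalizes n a (\<lambda>i j. (if j = k then c else 1) * U i j) d"
proof -
  let ?s = "\<lambda>j. if j = k then c else (1::real)"
  have "mmul n (mtr (\<lambda>i j. ?s j * U i j)) (\<lambda>i j. ?s j * U i j) i j = ?s i * ?s j * mmul n (mtr U) U i j" for i j
    unfolding mmul_def mtr_def by (simp add: sum_distrib_left mult_ac)
  moreover have "mmul n a (\<lambda>i j. ?s j * U i j) i j = ?s j * mmul n a U i j" for i j
    unfolding mmul_def by (simp add: sum_distrib_left mult_ac)
  ultimately show ?thesis
    using assms unfolding diagonalizes_def orth_mat_def meq_def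
    by (auto simp: mmul_mdiag mone_def)
qed

theorem sym_mat_diagonalizable: "sym_mat n a \<Longrightarrow> \<exists>U d. diagonalizes n a U d"
proof (induction n arbitrary: a)
  case 0
  then show ?case
    by (simp add: diagonalizes_def orth_mat_def meq_def)
next
  case (Suc m)
  obtain v l where v1: "(\<Sum>i<Suc m. (v i)\<^sup>2) = 1" and ev: "\<forall>i<Suc m. mapply (Suc m) a v i = l * v i"
    using sym_mat_eigenvector_exists[OF _ Suc.prems] by blast
  let ?H = "householder (Suc m) v"
  let ?C = "mmul (Suc m) (mmul (Suc m) ?H a) ?H"
  have C: "sym_mat (Suc m) ?C" "\<And>r. r < Suc m \<Longrightarrow> ?C r 0 = (if r = 0 then l else 0)"
    using householder_deflation[OF Suc.prems v1] ev by blast+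
  then have "sym_mat m (\<lambda>i j. ?C (Suc i) (Suc j))"
    unfolding sym_mat_def by simp
  then obtain U d where "diagonalizes m (\<lambda>i j. ?C (Suc i) (Suc j)) U d"
    using Suc.IH by blast
  then have "diagonalizes (Suc m) ?C (extend_mat U) (\<lambda>j. if j = 0 then l else d (j - 1))"
    using diagonalizes_extend_mat[of m ?C l U d] C by blast
  then show ?case
    using diagonalizes_conj[OF householder_sym householder_orth] by blast
qed

lemma mat_of_mult_vec_eq: "mat_of n a *\<^sub>v vec n x = vec n (mapply n a x)"
  by (rule eq_vecI) (simp_all add: mat_of_mult_vec mapply_def, simp add: mat_of_def)

lemma mat_of_power_mult_vec:
  "((mat_of n a ^\<^sub>m k) *\<^sub>v vec n x) = vec n ((mapply n a ^^ k) x)"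
proof (induction k arbitrary: x)
  case 0
  then show ?case
    by (simp add: mat_of_def)
next
  case (Suc k)
  have "(mat_of n a ^\<^sub>m Suc k) *\<^sub>v vec n x = (mat_of n a ^\<^sub>m k) *\<^sub>v (mat_of n a *\<^sub>v vec n x)"
    by (simp add: assoc_mult_mat_vec[of _ n n _ n])
  also have "\<dots> = vec n ((mapply n a ^^ Suc k) x)"
    unfolding mat_of_mult_vec_eq Suc.IH funpow_Suc_right by simp
  finally show ?case .
qed

lemma char_poly_similar_diag:
  fixes A P Q :: "'a::comm_ring_1 mat"
  assumes "A \<in> carrier_mat n n" "P \<in> carrier_mat n n" "Q \<in> carrier_mat n n"
    and "P * Q = 1\<^sub>m n" "Q * P = 1\<^sub>m n"
    and "A = P * mat n n (\<lambda>(i, j). if i = j then d i else 0) * Q"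
  shows "char_poly A = (\<Prod>k<n. [:- d k, 1:])"
proof -
  let ?D = "mat n n (\<lambda>(i, j). if i = j then d i else 0)"
  have "similar_mat A ?D"
    unfolding similar_mat_def similar_mat_wit_def using assms by (intro exI[of _ P] exI[of _ Q]) auto
  then have "char_poly A = char_poly ?D"
    by (rule char_poly_similar)
  also have "\<dots> = (\<Prod>e\<leftarrow>diag_mat ?D. [:- e, 1:])"
    by (rule char_poly_upper_triangular) (auto simp: upper_triangular_def)
  also have "diag_mat ?D = map d [0..<n]"
    unfolding diag_mat_def by auto
  finally show ?thesis
    by (simp add: prod.distinct_set_conv_list[symmetric] lessThan_atLeast0 o_def)
qed

section \<open>Expansion in an orthonormal eigenbasis\<close>

locale sym_eigenbasis =
  fixes n :: nat and a U :: "nat \<Rightarrow> nat \<Rightarrow> real" and d :: "nat \<Rightarrow> real"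
  assumes sym: "sym_mat n a" and diag: "diagonalizes n a U d"
begin

definition coord :: "(nat \<Rightarrow> real) \<Rightarrow> nat \<Rightarrow> real"
  where "coord x p = (\<Sum>j<n. U j p * x j)"

lemma orth: "orth_mat n U"
  using diag unfolding diagonalizes_def by blast

lemma col_eigen:
  assumes "i < n" "p < n"
  shows "mapply n a (\<lambda>j. U j p) i = d p * U i p"
proof -
  have "mmul n a U i p = mmul n U (mdiag d) i p"
    using diag assms unfolding diagonalizes_def by (blast dest: meqD)
  then show ?thesis
    using assms mmul_mdiag[of n U d i p] by (simp add: mmul_def mapply_def)
qed

lemma cols_orthonormal: "i < n \<Longrightarrow> j < n \<Longrightarrow> (\<Sum>k<n. U k i * U k j) = mone i j"
  using orth unfolding orth_mat_def by (auto dest: meqD simp: mmul_def mtr_def)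

lemma rows_orthonormal: "i < n \<Longrightarrow> j < n \<Longrightarrow> (\<Sum>p<n. U i p * U j p) = mone i j"
  using orth_mat_mmul_mtr[OF orth] by (auto dest: meqD simp: mmul_def mtr_def)

lemma col_unit: "k < n \<Longrightarrow> (\<Sum>i<n. (U i k)\<^sup>2) = 1"
  using cols_orthonormal[of k k] by (simp add: power2_eq_square mone_def)

lemma coord_expansion:
  assumes "i < n"
  shows "x i = (\<Sum>p<n. U i p * coord x p)"
proof -
  have "(\<Sum>p<n. U i p * coord x p) = (\<Sum>j<n. (\<Sum>p<n. U i p * U j p) * x j)"
    unfolding coord_def sum_distrib_left sum_distrib_right
    by (subst sum.swap) (simp add: mult_ac)
  also have "\<dots> = (\<Sum>j<n. mone i j * x j)"
    using assms by (intro sum.cong) (simp_all add: rows_orthonormal)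
  also have "\<dots> = x i"
    using assms by (simp add: sum.delta)
  finally show ?thesis ..
qed

lemma coord_mapply:
  assumes "p < n"
  shows "coord (mapply n a x) p = d p * coord x p"
proof -
  have "coord (mapply n a x) p = (\<Sum>k<n. mapply n a (\<lambda>j. U j p) k * x k)"
    unfolding coord_def mapply_def sum_distrib_left sum_distrib_right
    by (subst sum.swap) (use sym in \<open>auto simp: sym_mat_def mult_ac intro!: sum.cong\<close>)
  also have "\<dots> = d p * coord x p"
    using assms by (simp add: col_eigen coord_def sum_distrib_left mult_ac)
  finally show ?thesis .
qed

lemma coord_inner: "(\<Sum>i<n. x i * y i) = (\<Sum>p<n. coord x p * coord y p)"
proof -
  have "(\<Sum>i<n. x i * y i) = (\<Sum>i<n. x i * (\<Sum>p<n. U i p * coord y p))"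
    by (intro sum.cong refl) (metis coord_expansion lessThan_iff)
  also have "\<dots> = (\<Sum>i<n. \<Sum>p<n. x i * (U i p * coord y p))"
    by (simp add: sum_distrib_left)
  also have "\<dots> = (\<Sum>p<n. \<Sum>i<n. x i * (U i p * coord y p))"
    by (rule sum.swap)
  also have "\<dots> = (\<Sum>p<n. coord x p * coord y p)"
    unfolding coord_def[of x] sum_distrib_right by (simp add: mult_ac)
  finally show ?thesis .
qed

lemma quadratic_form_coord: "(\<Sum>i<n. x i * mapply n a x i) = (\<Sum>p<n. d p * (coord x p)\<^sup>2)"
  unfolding coord_inner[of x] by (intro sum.cong refl) (simp add: coord_mapply power2_eq_square)

lemma coord_eigenvector:
  assumes "\<And>i. i < n \<Longrightarrow> mapply n a t i = e * t i" and "p < n"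
  shows "d p * coord t p = e * coord t p"
proof -
  have "coord (mapply n a t) p = coord (\<lambda>i. e * t i) p"
    unfolding coord_def using assms(1) by (intro sum.cong) simp_all
  then show ?thesis
    using coord_mapply[OF assms(2)] by (simp add: coord_def sum_distrib_left mult_ac)
qed

lemma eigenvalue_in_spectrum:
  assumes "i0 < n" "t i0 \<noteq> 0" and "\<And>i. i < n \<Longrightarrow> mapply n a t i = e * t i"
  shows "\<exists>p<n. e = d p"
proof (rule ccontr)
  assume "\<not> (\<exists>p<n. e = d p)"
  then have "coord t p = 0" if "p < n" for p
    using coord_eigenvector[OF assms(3) that] that by auto
  then have "t i0 = 0"
    using coord_expansion[OF assms(1), of t] by simp
  with assms(2) show False ..
qed

lemma rayleigh_le:
  assumes "\<And>p. p < n \<Longrightarrow> d p \<le> l"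
  shows "(\<Sum>i<n. x i * mapply n a x i) \<le> l * (\<Sum>i<n. (x i)\<^sup>2)"
proof -
  have "(\<Sum>p<n. d p * (coord x p)\<^sup>2) \<le> (\<Sum>p<n. l * (coord x p)\<^sup>2)"
    using assms by (intro sum_mono mult_right_mono) auto
  also have "\<dots> = l * (\<Sum>i<n. (x i)\<^sup>2)"
    using coord_inner[of x x] by (simp add: sum_distrib_left power2_eq_square)
  finally show ?thesis
    unfolding quadratic_form_coord .
qed

lemma rayleigh_eq_imp_eigenvector:
  assumes le: "\<And>p. p < n \<Longrightarrow> d p \<le> l"
    and eq: "(\<Sum>i<n. x i * mapply n a x i) = l * (\<Sum>i<n. (x i)\<^sup>2)" and "i < n"
  shows "mapply n a x i = l * x i"
proof -
  have "(\<Sum>p<n. (l - d p) * (coord x p)\<^sup>2) = l * (\<Sum>p<n. (coord x p)\<^sup>2) - (\<Sum>p<n. d p * (coord x p)\<^sup>2)"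
    by (simp only: left_diff_distrib sum_subtractf sum_distrib_left)
  also have "\<dots> = 0"
    using eq coord_inner[of x x] unfolding quadratic_form_coord power2_eq_square by simp
  finally have "(\<Sum>p<n. (l - d p) * (coord x p)\<^sup>2) = 0" .
  then have "(l - d p) * (coord x p)\<^sup>2 = 0" if "p < n" for p
    using le that by (subst (asm) sum_nonneg_eq_0_iff) auto
  then have "d p = l \<or> coord x p = 0" if "p < n" for p
    using that by fastforce
  then have dl: "coord (mapply n a x) p = l * coord x p" if "p < n" for p
    using that coord_mapply[OF that] by auto
  have "mapply n a x i = (\<Sum>p<n. U i p * coord (mapply n a x) p)"
    by (rule coord_expansion[OF \<open>i < n\<close>])
  also have "\<dots> = l * (\<Sum>p<n. U i p * coord x p)"
    unfolding sum_distrib_left by (intro sum.cong refl) (simp add: dl)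
  also have "\<dots> = l * x i"
    unfolding coord_expansion[OF \<open>i < n\<close>, of x, symmetric] ..
  finally show ?thesis .
qed

lemma spectral_decomposition:
  assumes "i < n" "j < n"
  shows "a i j = (\<Sum>p<n. U i p * d p * U j p)"
proof -
  have "coord (\<lambda>k. a k j) p = d p * U j p" if "p < n" for p
  proof -
    have "coord (\<lambda>k. a k j) p = mapply n a (\<lambda>k. U k p) j"
      unfolding coord_def mapply_def using sym \<open>j < n\<close> unfolding sym_mat_def
      by (intro sum.cong) (auto simp: mult.commute)
    then show ?thesis
      using col_eigen[OF \<open>j < n\<close> that] by simp
  qed
  then have "(\<Sum>p<n. U i p * coord (\<lambda>k. a k j) p) = (\<Sum>p<n. U i p * d p * U j p)"
    by (intro sum.cong refl) (simp add: mult.assoc)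
  then show ?thesis
    using coord_expansion[OF \<open>i < n\<close>, of "\<lambda>k. a k j"] by simp
qed

lemma char_poly_eq: "char_poly (mat_of n a) = (\<Prod>k<n. [:- d k, 1:])"
proof (rule char_poly_similar_diag)
  have "meq n a (mmul n (mmul n U (mdiag d)) (mtr U))"
    unfolding meq_def
    by (auto simp: spectral_decomposition mmul_def[of n "mmul n U (mdiag d)"] mmul_mdiag mtr_def
        intro!: sum.cong)
  then show "mat_of n a = mat_of n U * mat n n (\<lambda>(i, j). if i = j then d i else 0) * mat_of n (mtr U)"
    by (simp flip: mat_of_eq_iff add: mat_of_mmul mat_of_mdiag)
  show "mat_of n U * mat_of n (mtr U) = 1\<^sub>m n"
    using orth_mat_mmul_mtr[OF orth] by (simp flip: mat_of_eq_iff add: mat_of_mmul mat_of_mone)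
  show "mat_of n (mtr U) * mat_of n U = 1\<^sub>m n"
    using orth unfolding orth_mat_def by (simp flip: mat_of_eq_iff add: mat_of_mmul mat_of_mone)
qed auto

lemma coord_mapply_power: "p < n \<Longrightarrow> coord ((mapply n a ^^ k) x) p = d p ^ k * coord x p"
  by (induction k) (simp_all add: coord_mapply)

lemma mexp_apply_eq:
  assumes "i < n"
  shows "mexp_apply (mat_of n a) z (vec n x) $ i = (\<Sum>p<n. U i p * coord x p * exp (d p * z))"
proof -
  have "z ^ k / fact k * ((mat_of n a ^\<^sub>m k) *\<^sub>v vec n x) $ i
      = (\<Sum>p<n. U i p * coord x p * ((d p * z) ^ k /\<^sub>R fact k))" for k
  proof -
    have "((mat_of n a ^\<^sub>m k) *\<^sub>v vec n x) $ i = (\<Sum>p<n. U i p * (d p ^ k * coord x p))"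
      unfolding mat_of_power_mult_vec using assms coord_expansion[OF assms, of "(mapply n a ^^ k) x"]
      by (simp add: coord_mapply_power)
    then show ?thesis
      by (simp add: sum_distrib_left power_mult_distrib divide_inverse mult_ac)
  qed
  moreover have "(\<lambda>k. \<Sum>p<n. U i p * coord x p * ((d p * z) ^ k /\<^sub>R fact k))
      sums (\<Sum>p<n. U i p * coord x p * exp (d p * z))"
    by (intro sums_sum sums_mult exp_converges)
  ultimately show ?thesis
    using assms by (simp add: mexp_apply_def mat_of_def sums_iff)
qed

end

locale dominant_eigenbasis = sym_eigenbasis +
  fixes k0 :: nat
  assumes k0: "k0 < n"
    and dominant: "\<And>k. k < n \<Longrightarrow> k \<noteq> k0 \<Longrightarrow> d k < d k0"
    and positive: "\<And>i. i < n \<Longrightarrow> 0 < U i k0"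
begin

lemma eigenvalue_dominant: "eigenvalue (mat_of n a) (d k0)"
  unfolding eigenvalue_def eigenvector_def
proof (intro exI conjI)
  let ?w = "vec n (\<lambda>i. U i k0)"
  show "?w \<in> carrier_vec (dim_row (mat_of n a))"
    by (simp add: mat_of_def)
  have "0 < n"
    using k0 by simp
  then have "?w $ 0 \<noteq> 0\<^sub>v n $ 0"
    using positive[of 0] by simp
  then show "?w \<noteq> 0\<^sub>v (dim_row (mat_of n a))"
    by (auto simp: mat_of_def)
  show "mat_of n a *\<^sub>v ?w = d k0 \<cdot>\<^sub>v ?w"
    unfolding mat_of_mult_vec_eq by (rule eq_vecI) (simp_all add: col_eigen k0)
qed

lemma order_dominant: "order (d k0) (char_poly (mat_of n a)) = 1"
proof -
  define q where "q = (\<Prod>k\<in>{..<n} - {k0}. [:- d k, 1:])"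
  have cp: "char_poly (mat_of n a) = [:- d k0, 1:] * q"
    unfolding char_poly_eq q_def using k0 by (simp add: prod.remove)
  have "poly q (d k0) \<noteq> 0"
    unfolding q_def poly_prod using dominant by fastforce
  then have "order (d k0) q = 0" and "[:- d k0, 1:] * q \<noteq> 0"
    by (auto intro: order_0I no_zero_divisors simp del: mult_pCons_left)
  then show ?thesis
    unfolding cp order_mult[OF \<open>[:- d k0, 1:] * q \<noteq> 0\<close>] by (simp add: order_linear)
qed

lemma complex_eigenvalue_le:
  assumes "eigenvalue (map_mat complex_of_real (mat_of n a)) e"
  shows "Re e \<le> d k0"
proof -
  obtain t i0 where "i0 < n" "t i0 \<noteq> 0" "\<forall>i<n. mapply n a t i = Re e * t i"
    using sym_mat_complex_eigenvalue(2)[OF sym assms] by blast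
  then obtain p where "p < n" "Re e = d p"
    using eigenvalue_in_spectrum by blast
  then show ?thesis
    using dominant[of p] by (cases "p = k0") auto
qed

lemma dominant_eigenvector_multiple:
  assumes "\<And>i. i < n \<Longrightarrow> mapply n a y i = d k0 * y i" and "i < n"
  shows "y i = coord y k0 * U i k0"
proof -
  have "coord y p = 0" if "p < n" "p \<noteq> k0" for p
    using coord_eigenvector[OF assms(1) \<open>p < n\<close>] dominant[OF that] by auto
  then have "(\<Sum>p<n. U i p * coord y p) = (\<Sum>p<n. if p = k0 then U i k0 * coord y k0 else 0)"
    by (intro sum.cong) auto
  then show ?thesis
    using coord_expansion[OF assms(2), of y] k0 by simp
qed

lemma positive_unit_eigenvector_eq:
  assumes eig: "\<And>i. i < n \<Longrightarrow> mapply n a y i = d k0 * y i"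
    and pos: "\<And>i. i < n \<Longrightarrow> 0 < y i" and unit: "(\<Sum>i<n. (y i)\<^sup>2) = 1" and "i < n"
  shows "y i = U i k0"
proof -
  let ?c = "coord y k0"
  have y: "y i = ?c * U i k0" if "i < n" for i
    using dominant_eigenvector_multiple[OF eig that] .
  have "1 = (\<Sum>i<n. ?c\<^sup>2 * (U i k0)\<^sup>2)"
    unfolding unit[symmetric] by (intro sum.cong) (simp_all add: y power_mult_distrib)
  also have "\<dots> = ?c\<^sup>2"
    using col_unit[OF k0] by (simp flip: sum_distrib_left)
  finally have "?c\<^sup>2 = 1" ..
  moreover have "0 < ?c"
    using pos[OF k0] positive[OF k0] y[OF k0] by (simp add: zero_less_mult_iff)
  ultimately have "?c = 1"
    by (simp add: power2_eq_1_iff)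
  then show ?thesis
    using y[OF \<open>i < n\<close>] by simp
qed

lemma mexp_apply_asymptotics:
  assumes "i < n" and "coord v k0 \<noteq> 0"
  shows "((\<lambda>z. mexp_apply (mat_of n a) z (vec n v) $ i / (coord v k0 * U i k0 * exp (d k0 * z)))
           \<longlongrightarrow> 1) at_top"
proof -
  let ?C = "coord v k0 * U i k0"
  have "?C \<noteq> 0"
    using assms positive[OF assms(1)] by simp
  have eq: "mexp_apply (mat_of n a) z (vec n v) $ i / (?C * exp (d k0 * z))
      = (\<Sum>p<n. U i p * coord v p / ?C * exp ((d p - d k0) * z))" for z
    unfolding mexp_apply_eq[OF assms(1)] sum_divide_distrib
    by (intro sum.cong refl) (simp add: exp_diff left_diff_distrib)
  have "((\<lambda>z. \<Sum>p<n. U i p * coord v p / ?C * exp ((d p - d k0) * z))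
      \<longlongrightarrow> (\<Sum>p<n. U i p * coord v p / ?C * mone p k0)) at_top"
  proof (intro tendsto_sum tendsto_mult tendsto_const)
    fix p assume "p \<in> {..<n}"
    show "((\<lambda>z. exp ((d p - d k0) * z)) \<longlongrightarrow> mone p k0) at_top"
    proof (cases "p = k0")
      case False
      with \<open>p \<in> {..<n}\<close> have "d p - d k0 < 0"
        using dominant by simp
      then have "filterlim (\<lambda>z. (d p - d k0) * z) at_bot at_top"
        by (intro filterlim_tendsto_neg_mult_at_bot[OF tendsto_const _ filterlim_ident])
      with False show ?thesis
        by (simp add: mone_def filterlim_compose[OF exp_at_bot])
    qed (simp add: mone_def)
  qed
  moreover have "(\<Sum>p<n. U i p * coord v p / ?C * mone p k0) = 1"
    using k0 \<open>?C \<noteq> 0\<close> by (simp add: sum.delta' flip: sum_divide_distrib)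
  ultimately show ?thesis
    unfolding eq by simp
qed

end

section \<open>Perron--Frobenius for symmetric irreducible Metzler matrices\<close>

definition support_graph :: "nat \<Rightarrow> (nat \<Rightarrow> nat \<Rightarrow> real) \<Rightarrow> (nat \<times> nat) set"
  where "support_graph n a = {(i, j). i < n \<and> j < n \<and> i \<noteq> j \<and> 0 < a i j}"

locale irreducible_metzler =
  fixes n :: nat and a :: "nat \<Rightarrow> nat \<Rightarrow> real"
  assumes metzler: "\<And>i j. i < n \<Longrightarrow> j < n \<Longrightarrow> i \<noteq> j \<Longrightarrow> 0 \<le> a i j"
    and irreducible: "\<And>i j. i < n \<Longrightarrow> j < n \<Longrightarrow> (i, j) \<in> (support_graph n a)\<^sup>*"
begin

lemma nonneg_eigenvector_vanishes:
  assumes nonneg: "\<And>i. i < n \<Longrightarrow> 0 \<le> y i"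
    and eig: "\<And>i. i < n \<Longrightarrow> mapply n a y i = l * y i"
    and "i0 < n" "y i0 = 0" and "j < n"
  shows "y j = 0"
proof -
  have edge: "y k = 0" if "(i, k) \<in> support_graph n a" and "y i = 0" for i k
  proof -
    from that(1) have i: "i < n" and "k < n" "0 < a i k"
      unfolding support_graph_def by auto
    have terms: "\<forall>j\<in>{..<n}. 0 \<le> a i j * y j"
      using metzler[OF i] nonneg \<open>y i = 0\<close> by (metis lessThan_iff mult_eq_0_iff mult_nonneg_nonneg order_refl)
    have "(\<Sum>j<n. a i j * y j) = 0"
      using eig[OF i] \<open>y i = 0\<close> by (simp add: mapply_def)
    then have "a i k * y k = 0"
      using terms \<open>k < n\<close> sum_nonneg_eq_0_iff[of "{..<n}" "\<lambda>j. a i j * y j"] by simp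
    with \<open>0 < a i k\<close> show ?thesis
      by simp
  qed
  from irreducible[OF \<open>i0 < n\<close> \<open>j < n\<close>] show ?thesis
  proof (induction rule: rtrancl_induct)
    case base
    then show ?case using \<open>y i0 = 0\<close> .
  next
    case (step b c)
    then show ?case using edge by blast
  qed
qed

lemma positive_eigenvector_unique:
  assumes wpos: "\<And>i. i < n \<Longrightarrow> 0 < w i"
    and ew: "\<And>i. i < n \<Longrightarrow> mapply n a w i = l * w i"
    and ey: "\<And>i. i < n \<Longrightarrow> mapply n a y i = l * y i"
    and "0 < n"
  shows "\<exists>c. \<forall>i<n. y i = c * w i"
proof -
  txt \<open>Subtract the largest multiple of \<open>w\<close> keeping \<open>y\<close> nonnegative; the difference vanishes
    somewhere, hence everywhere.\<close>
  define c where "c = Min ((\<lambda>i. y i / w i) ` {..<n})"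
  have "c \<in> (\<lambda>i. y i / w i) ` {..<n}"
    unfolding c_def using \<open>0 < n\<close> by (intro Min_in) auto
  then obtain i0 where i0: "i0 < n" "c = y i0 / w i0"
    by auto
  have nonneg: "0 \<le> y i - c * w i" if "i < n" for i
  proof -
    have "c \<le> y i / w i"
      unfolding c_def using that by (intro Min_le) auto
    then show ?thesis
      using wpos[OF that] by (simp add: field_simps)
  qed
  have eig: "mapply n a (\<lambda>i. y i - c * w i) i = l * (y i - c * w i)" if "i < n" for i
  proof -
    have "mapply n a (\<lambda>i. y i - c * w i) i = mapply n a y i - c * mapply n a w i"
      by (simp add: mapply_def right_diff_distrib sum_subtractf sum_distrib_left mult_ac)
    then show ?thesis
      using ey[OF that] ew[OF that] by (simp add: algebra_simps)
  qed
  have "y i0 - c * w i0 = 0"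
    using i0 wpos[OF i0(1)] by simp
  then have "y i - c * w i = 0" if "i < n" for i
    using nonneg_eigenvector_vanishes[OF nonneg eig i0(1) _ that] by simp
  then show ?thesis
    by auto
qed

end

locale metzler_eigenbasis = sym_eigenbasis + irreducible_metzler
begin

lemma top_eigenvector_abs:
  assumes k1: "k1 < n" and maximal: "\<And>p. p < n \<Longrightarrow> d p \<le> d k1"
  shows "\<And>i. i < n \<Longrightarrow> mapply n a (\<lambda>j. \<bar>U j k1\<bar>) i = d k1 * \<bar>U i k1\<bar>"
    and "\<And>i. i < n \<Longrightarrow> 0 < \<bar>U i k1\<bar>"
proof -
  let ?u = "\<lambda>i. U i k1" and ?g = "\<lambda>i. \<bar>U i k1\<bar>"
  txt \<open>Since off-diagonal entries are nonnegative, \<open>|u|\<close> has at least the Rayleigh quotient of \<open>u\<close>,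
    which is already maximal.\<close>
  have g1: "(\<Sum>i<n. (?g i)\<^sup>2) = 1"
    using col_unit[OF k1] by simp
  have "(\<Sum>i<n. ?u i * mapply n a ?u i) = d k1 * (\<Sum>i<n. (?u i)\<^sup>2)"
    by (simp add: col_eigen k1 power2_eq_square sum_distrib_left mult_ac)
  then have "d k1 = (\<Sum>i<n. ?u i * mapply n a ?u i)"
    using col_unit[OF k1] by simp
  also have "\<dots> \<le> (\<Sum>i<n. ?g i * mapply n a ?g i)"
    unfolding mapply_def sum_distrib_left
  proof (intro sum_mono)
    fix i j assume "i \<in> {..<n}" "j \<in> {..<n}"
    then show "?u i * (a i j * ?u j) \<le> ?g i * (a i j * ?g j)"
      using metzler[of i j] mult_left_mono[OF abs_ge_self[of "?u i * ?u j"], of "a i j"]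
      by (cases "i = j") (auto simp: abs_mult mult_ac abs_mult_self_eq)
  qed
  finally have "d k1 \<le> (\<Sum>i<n. ?g i * mapply n a ?g i)" .
  moreover have "(\<Sum>i<n. ?g i * mapply n a ?g i) \<le> d k1 * (\<Sum>i<n. (?g i)\<^sup>2)"
    by (rule rayleigh_le[OF maximal])
  ultimately have rayleigh: "(\<Sum>i<n. ?g i * mapply n a ?g i) = d k1 * (\<Sum>i<n. (?g i)\<^sup>2)"
    using g1 by simp
  show eig: "mapply n a ?g i = d k1 * ?g i" if "i < n" for i
    by (rule rayleigh_eq_imp_eigenvector[where x = ?g, OF maximal rayleigh that])
  show "0 < ?g i" if "i < n" for i
  proof (rule ccontr)
    assume "\<not> 0 < ?g i"
    then have "?g j = 0" if "j < n" for j
      using nonneg_eigenvector_vanishes[OF _ eig \<open>i < n\<close> _ that] by simp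
    with g1 show False
      by simp
  qed
qed

lemma top_eigenspace_col:
  assumes k1: "k1 < n" and maximal: "\<And>p. p < n \<Longrightarrow> d p \<le> d k1"
    and "k < n" "d k = d k1"
  shows "\<exists>c. c * c = 1 \<and> (\<forall>i<n. U i k = c * \<bar>U i k1\<bar>)"
proof -
  obtain c where c: "\<forall>i<n. U i k = c * \<bar>U i k1\<bar>"
    using positive_eigenvector_unique[OF top_eigenvector_abs(2,1)[OF k1 maximal], of "\<lambda>i. U i k"]
      col_eigen[OF _ \<open>k < n\<close>] \<open>d k = d k1\<close> k1 by auto
  have "1 = (\<Sum>i<n. (c * \<bar>U i k1\<bar>)\<^sup>2)"
    using col_unit[OF \<open>k < n\<close>] c by simp
  also have "\<dots> = c\<^sup>2 * (\<Sum>i<n. (U i k1)\<^sup>2)"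
    by (simp add: power_mult_distrib sum_distrib_left)
  also have "\<dots> = c * c"
    using col_unit[OF k1] by (simp add: power2_eq_square)
  finally show ?thesis
    using c by auto
qed

lemma top_eigenvalue_simple:
  assumes k1: "k1 < n" and maximal: "\<And>p. p < n \<Longrightarrow> d p \<le> d k1"
    and "k < n" "d k = d k1"
  shows "k = k1"
proof (rule ccontr)
  assume "k \<noteq> k1"
  obtain c where c: "c * c = 1" "\<forall>i<n. U i k = c * \<bar>U i k1\<bar>"
    using top_eigenspace_col[OF k1 maximal \<open>k < n\<close> \<open>d k = d k1\<close>] by blast
  obtain c' where c': "c' * c' = 1" "\<forall>i<n. U i k1 = c' * \<bar>U i k1\<bar>"
    using top_eigenspace_col[OF k1 maximal k1 refl] by blast
  have "U i k = (c * c') * U i k1" if "i < n" for i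
  proof -
    have "c' * U i k1 = c' * (c' * \<bar>U i k1\<bar>)"
      using c'(2) that by simp
    also have "\<dots> = \<bar>U i k1\<bar>"
      using c'(1) by (simp add: mult.assoc[symmetric])
    finally show ?thesis
      using c(2) that by (simp add: mult.assoc)
  qed
  then have "0 = c * c' * (\<Sum>i<n. U i k1 * U i k1)"
    using cols_orthonormal[OF \<open>k < n\<close> k1] \<open>k \<noteq> k1\<close> by (simp add: mone_def sum_distrib_left mult.assoc)
  also have "\<dots> = c * c'"
    using col_unit[OF k1] by (simp add: power2_eq_square)
  finally have "(c * c) * (c' * c') = 0"
    by (simp add: mult_ac)
  with c c' show False
    by simp
qed

lemma exists_dominant_eigenbasis:
  assumes "0 < n"
  shows "\<exists>U' k0. dominant_eigenbasis n a U' d k0"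
proof -
  have "Max (d ` {..<n}) \<in> d ` {..<n}"
    using \<open>0 < n\<close> by (intro Max_in) auto
  then obtain k1 where k1: "k1 < n" "d k1 = Max (d ` {..<n})"
    by auto
  have maximal: "d p \<le> d k1" if "p < n" for p
    unfolding k1(2) using that by (intro Max_ge) auto
  obtain c where c: "c * c = 1" "\<forall>i<n. U i k1 = c * \<bar>U i k1\<bar>"
    using top_eigenspace_col[OF k1(1) maximal k1(1) refl] by blast
  let ?U' = "\<lambda>i j. (if j = k1 then c else 1) * U i j"
  have "dominant_eigenbasis n a ?U' d k1"
  proof unfold_locales
    show "diagonalizes n a ?U' d"
      by (rule diagonalizes_scale_col[OF diag c(1)])
    show "d k < d k1" if "k < n" "k \<noteq> k1" for k
      using maximal[OF that(1)] top_eigenvalue_simple[OF k1(1) maximal that(1)] that(2) by fastforce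
    show "0 < ?U' i k1" if "i < n" for i
    proof -
      have "U i k1 = c * \<bar>U i k1\<bar>"
        using c(2) that by blast
      then have "c * U i k1 = c * c * \<bar>U i k1\<bar>"
        by (simp only: mult.assoc)
      then show ?thesis
        using c(1) top_eigenvector_abs(2)[OF k1(1) maximal that] by simp
    qed
  qed (use sym k1 in auto)
  then show ?thesis
    by (intro exI)
qed

end

theorem perron_frobenius_symmetric:
  assumes "0 < n" "sym_mat n a" "irreducible_metzler n a"
  shows "\<exists>U d k0. dominant_eigenbasis n a U d k0"
proof -
  obtain U d where "diagonalizes n a U d"
    using sym_mat_diagonalizable[OF assms(2)] by blast
  then interpret metzler_eigenbasis n a U d
    using assms by (intro_locales) (simp_all add: sym_eigenbasis_def irreducible_metzler_def)
  show ?thesis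
    using exists_dominant_eigenbasis[OF assms(1)] by blast
qed

section \<open>The index set \<open>T\<^sub>N\<close>\<close>

lemma tn_list_Suc: "tn_list (Suc N) = tn_list N @ map (\<lambda>j. (j, N)) [0..<Suc N]"
  unfolding tn_list_def by simp

lemma set_tn_list: "set (tn_list N) = TN N"
  by (induction N) (auto simp: tn_list_Suc, auto simp: tn_list_def TN_def)

lemma distinct_tn_list: "distinct (tn_list N)"
proof (induction N)
  case (Suc N)
  have "set (tn_list N) \<inter> set (map (\<lambda>j. (j, N)) [0..<Suc N]) = {}"
    unfolding set_tn_list TN_def by auto
  with Suc show ?case
    unfolding tn_list_Suc by (auto simp: distinct_map inj_on_def)
qed (simp add: tn_list_def)

lemma finite_TN [simp]: "finite (TN N)"
  unfolding set_tn_list[symmetric] by simp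

lemma nth_tn_list_in_TN: "k < length (tn_list N) \<Longrightarrow> tn_list N ! k \<in> TN N"
  using nth_mem set_tn_list by blast

lemma nth_tn_list_eq_iff:
  "i < length (tn_list N) \<Longrightarrow> k < length (tn_list N) \<Longrightarrow> tn_list N ! i = tn_list N ! k \<longleftrightarrow> i = k"
  by (rule nth_eq_iff_index_eq[OF distinct_tn_list])

lemma TN_obtain_index:
  assumes "p \<in> TN N"
  obtains k where "k < length (tn_list N)" "p = tn_list N ! k"
  using assms unfolding set_tn_list[symmetric] by (metis in_set_conv_nth)

definition TN_index :: "nat \<Rightarrow> nat \<times> nat \<Rightarrow> nat"
  where "TN_index N = the_inv_into {..<length (tn_list N)} (\<lambda>k. tn_list N ! k)"

lemma inj_on_nth_tn_list: "inj_on (\<lambda>k. tn_list N ! k) {..<length (tn_list N)}"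
  by (auto simp: inj_on_def nth_tn_list_eq_iff)

lemma image_nth_tn_list: "(\<lambda>k. tn_list N ! k) ` {..<length (tn_list N)} = TN N"
  unfolding set_tn_list[symmetric] by (auto simp: set_conv_nth)

lemma TN_index_nth [simp]: "k < length (tn_list N) \<Longrightarrow> TN_index N (tn_list N ! k) = k"
  unfolding TN_index_def by (simp add: the_inv_into_f_f[OF inj_on_nth_tn_list])

lemma nth_TN_index [simp]: "p \<in> TN N \<Longrightarrow> tn_list N ! TN_index N p = p"
  unfolding TN_index_def using f_the_inv_into_f[OF inj_on_nth_tn_list] image_nth_tn_list by metis

lemma TN_index_less: "p \<in> TN N \<Longrightarrow> TN_index N p < length (tn_list N)"
  unfolding TN_index_def using the_inv_into_into[OF inj_on_nth_tn_list] image_nth_tn_list by blast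

lemma sum_TN_reindex: "(\<Sum>p\<in>TN N. f p) = (\<Sum>k<length (tn_list N). f (tn_list N ! k))"
  unfolding image_nth_tn_list[symmetric] by (simp add: sum.reindex[OF inj_on_nth_tn_list])

lemma sv_sym: "sv S j l = sv S l j"
  unfolding sv_def by auto

lemma sv_TN: "p \<in> TN N \<Longrightarrow> S p = sv S (fst p) (snd p)"
  unfolding TN_def sv_def by auto

lemma sum_TN_sym:
  fixes h :: "nat \<Rightarrow> nat \<Rightarrow> real"
  assumes sym: "\<And>j l. j < N \<Longrightarrow> l < N \<Longrightarrow> h j l = h l j"
  shows "2 * (\<Sum>p\<in>TN N. h (fst p) (snd p)) = (\<Sum>j<N. \<Sum>l<N. h j l) + (\<Sum>j<N. h j j)"
proof -
  define A where "A = {(j, l). j < l \<and> l < N}"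
  define D where "D = (\<lambda>j. (j, j)) ` {..<N}"
  define g where "g p = h (fst p) (snd p)" for p
  have fin: "finite A" "finite (prod.swap ` A)" "finite D"
    by (auto intro: finite_subset[of _ "{..<N} \<times> {..<N}"] simp: A_def D_def)
  have "sum g (prod.swap ` A) = sum g A"
    by (subst sum.reindex) (auto simp: g_def A_def sym intro!: sum.cong)
  moreover have "sum g D = (\<Sum>j<N. h j j)"
    unfolding D_def g_def by (subst sum.reindex) (auto simp: inj_on_def)
  moreover have "(\<Sum>j<N. \<Sum>l<N. h j l) = sum g (A \<union> D \<union> prod.swap ` A)"
  proof -
    have "{..<N} \<times> {..<N} = A \<union> D \<union> prod.swap ` A"
      unfolding A_def D_def by auto
    then show ?thesis
      unfolding g_def sum.cartesian_product by (simp add: case_prod_unfold)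
  qed
  moreover have "TN N = A \<union> D"
    unfolding TN_def A_def D_def by auto
  moreover have "A \<inter> D = {}" "(A \<union> D) \<inter> prod.swap ` A = {}"
    unfolding A_def D_def by auto
  ultimately show ?thesis
    using fin by (simp add: sum.union_disjoint g_def)
qed

lemma sum_TN_second_moments:
  "(\<Sum>p\<in>TN N. W p * ((2 - (if fst p = snd p then 1 else 0)) * q (fst p) * q (snd p)))
     = (\<Sum>j<N. \<Sum>l<N. sv W j l * q j * q l)"
proof -
  define h where "h j l = sv W j l * q j * q l" for j l
  have diag: "(\<Sum>p\<in>TN N. if fst p = snd p then h (fst p) (snd p) else 0) = (\<Sum>j<N. h j j)"
  proof -
    have "{p \<in> TN N. fst p = snd p} = (\<lambda>j. (j, j)) ` {..<N}"
      unfolding TN_def by auto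
    then show ?thesis
      by (simp add: sum.inter_filter[symmetric] sum.reindex inj_on_def)
  qed
  have "(\<Sum>p\<in>TN N. W p * ((2 - (if fst p = snd p then 1 else 0)) * q (fst p) * q (snd p)))
      = 2 * (\<Sum>p\<in>TN N. h (fst p) (snd p)) - (\<Sum>p\<in>TN N. if fst p = snd p then h (fst p) (snd p) else 0)"
    unfolding sum_distrib_left sum_subtractf[symmetric]
    by (intro sum.cong refl) (auto simp: h_def sv_TN[of _ N W] algebra_simps)
  also have "\<dots> = (\<Sum>j<N. \<Sum>l<N. h j l)"
    unfolding diag by (subst sum_TN_sym) (auto simp: h_def sv_sym)
  finally show ?thesis
    unfolding h_def .
qed

section \<open>The matrix of \<open>\<Theta> - \<Psi>\<close>\<close>

definition TN_basis :: "nat \<times> nat \<Rightarrow> nat \<times> nat \<Rightarrow> real"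
  where "TN_basis q = (\<lambda>p. if p = q then 1 else 0)"

definition moment_matrix :: "nat \<Rightarrow> (nat \<Rightarrow> nat \<Rightarrow> real) \<Rightarrow> (nat \<Rightarrow> real) \<Rightarrow> nat \<Rightarrow> nat \<Rightarrow> real"
  where "moment_matrix N \<Gamma> \<Lambda> i k = ThetaPsi N \<Gamma> \<Lambda> (TN_basis (tn_list N ! k)) (tn_list N ! i)"

lemma ThetaPsi_cong:
  assumes "\<And>q. q \<in> TN N \<Longrightarrow> S q = S' q" and "p \<in> TN N"
  shows "ThetaPsi N \<Gamma> \<Lambda> S p = ThetaPsi N \<Gamma> \<Lambda> S' p"
proof -
  have sv: "sv S x y = sv S' x y" if "x < N" "y < N" for x y
    using assms(1) that unfolding sv_def TN_def by auto
  obtain j l where p: "p = (j, l)" "j < N" "l < N"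
    using assms(2) unfolding TN_def by auto
  then show ?thesis
    unfolding ThetaPsi_def Theta_def Psi_def by (auto simp: sv intro!: sum.cong)
qed

lemma ThetaPsi_zero: "ThetaPsi N \<Gamma> \<Lambda> (\<lambda>q. 0) p = 0"
  and ThetaPsi_add: "ThetaPsi N \<Gamma> \<Lambda> (\<lambda>q. S q + S' q) p = ThetaPsi N \<Gamma> \<Lambda> S p + ThetaPsi N \<Gamma> \<Lambda> S' p"
  and ThetaPsi_scale: "ThetaPsi N \<Gamma> \<Lambda> (\<lambda>q. c * S q) p = c * ThetaPsi N \<Gamma> \<Lambda> S p"
proof -
  have "sv (\<lambda>q. 0) j l = 0" "sv (\<lambda>q. S q + S' q) j l = sv S j l + sv S' j l"
    "sv (\<lambda>q. c * S q) j l = c * sv S j l" for j l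
    unfolding sv_def by simp_all
  then show "ThetaPsi N \<Gamma> \<Lambda> (\<lambda>q. 0) p = 0"
    and "ThetaPsi N \<Gamma> \<Lambda> (\<lambda>q. S q + S' q) p = ThetaPsi N \<Gamma> \<Lambda> S p + ThetaPsi N \<Gamma> \<Lambda> S' p"
    and "ThetaPsi N \<Gamma> \<Lambda> (\<lambda>q. c * S q) p = c * ThetaPsi N \<Gamma> \<Lambda> S p"
    unfolding ThetaPsi_def Theta_def Psi_def
    by (simp_all add: case_prod_unfold sum_distrib_left algebra_simps flip: sum.distrib)
qed

lemma ThetaPsi_sum:
  "finite K \<Longrightarrow> ThetaPsi N \<Gamma> \<Lambda> (\<lambda>q. \<Sum>k\<in>K. c k * F k q) p = (\<Sum>k\<in>K. c k * ThetaPsi N \<Gamma> \<Lambda> (F k) p)"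
  by (induction K rule: finite_induct) (simp_all add: ThetaPsi_zero ThetaPsi_add ThetaPsi_scale)

lemma TN_basis_expansion:
  assumes "q \<in> TN N"
  shows "(\<Sum>k<length (tn_list N). S (tn_list N ! k) * TN_basis (tn_list N ! k) q) = S q"
proof -
  obtain i where i: "i < length (tn_list N)" "q = tn_list N ! i"
    using TN_obtain_index[OF assms] .
  then have "(\<Sum>k<length (tn_list N). S (tn_list N ! k) * TN_basis (tn_list N ! k) q)
      = (\<Sum>k<length (tn_list N). if k = i then S q else 0)"
    by (intro sum.cong refl) (auto simp: TN_basis_def nth_tn_list_eq_iff)
  with i(1) show ?thesis
    by simp
qed

lemma ThetaPsi_nth:
  assumes "i < length (tn_list N)"
  shows "ThetaPsi N \<Gamma> \<Lambda> S (tn_list N ! i)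
           = mapply (length (tn_list N)) (moment_matrix N \<Gamma> \<Lambda>) (\<lambda>k. S (tn_list N ! k)) i"
proof -
  let ?ts = "tn_list N"
  have "ThetaPsi N \<Gamma> \<Lambda> S (?ts ! i)
      = ThetaPsi N \<Gamma> \<Lambda> (\<lambda>q. \<Sum>k<length ?ts. S (?ts ! k) * TN_basis (?ts ! k) q) (?ts ! i)"
    by (rule ThetaPsi_cong) (simp_all add: TN_basis_expansion nth_tn_list_in_TN assms)
  then show ?thesis
    by (simp add: ThetaPsi_sum mapply_def moment_matrix_def mult.commute)
qed

lemma ThetaPsi_mat_eq: "ThetaPsi_mat N \<Gamma> \<Lambda> = mat_of (length (tn_list N)) (moment_matrix N \<Gamma> \<Lambda>)"
  unfolding ThetaPsi_mat_def mat_of_def moment_matrix_def TN_basis_def Let_def by simp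

definition spair :: "nat \<Rightarrow> nat \<Rightarrow> nat \<times> nat"
  where "spair x y = (min x y, max x y)"

lemma sv_eq_spair: "sv S x y = S (spair x y)"
  unfolding sv_def spair_def by (simp add: min_def max_def)

lemma spair_in_TN: "x < N \<Longrightarrow> y < N \<Longrightarrow> spair x y \<in> TN N"
  unfolding spair_def TN_def by auto

lemma spair_sym: "spair x y = spair y x"
  unfolding spair_def by (simp add: min.commute max.commute)

lemma spair_eq_iff_left: "spair x y = spair x m \<longleftrightarrow> y = m"
  unfolding spair_def by (auto simp: min_def max_def split: if_splits)

lemma spair_TN: "p \<in> TN N \<Longrightarrow> spair (fst p) (snd p) = p"
  unfolding spair_def TN_def by auto

text \<open>\<open>(\<Theta> - \<Psi>) S\<close> in terms of the symmetric matrix \<open>t = sv S\<close>, with the sums over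
  \<open>n \<notin> {j, l}\<close> absorbed into the diagonal of \<open>\<Gamma>\<close>; unlike \<open>Theta\<close> it is visibly symmetric in
  \<open>j, l\<close>.\<close>

definition moment_gen :: "nat \<Rightarrow> (nat \<Rightarrow> nat \<Rightarrow> real) \<Rightarrow> (nat \<Rightarrow> real) \<Rightarrow> (nat \<Rightarrow> nat \<Rightarrow> real) \<Rightarrow> nat \<Rightarrow> nat \<Rightarrow> real"
  where "moment_gen N \<Gamma> \<Lambda> t j l =
    (\<Sum>m<N. \<Gamma> j m * t m l + t j m * \<Gamma> m l) + \<Gamma> j l * (t j j + t l l - 2 * t j l) - (\<Lambda> j + \<Lambda> l) * t j l"

text \<open>Twice the pairing of \<open>T\<close> with \<open>(\<Theta> - \<Psi>) S\<close> over \<open>T\<^sub>N\<close>, in terms of \<open>t = sv T\<close> and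
  \<open>s = sv S\<close>: the full double sum counts each off-diagonal pair twice and each diagonal pair once.\<close>

definition moment_form :: "nat \<Rightarrow> (nat \<Rightarrow> nat \<Rightarrow> real) \<Rightarrow> (nat \<Rightarrow> real) \<Rightarrow> (nat \<Rightarrow> nat \<Rightarrow> real) \<Rightarrow> (nat \<Rightarrow> nat \<Rightarrow> real) \<Rightarrow> real"
  where "moment_form N \<Gamma> \<Lambda> t s =
    (\<Sum>j<N. \<Sum>l<N. t j l * moment_gen N \<Gamma> \<Lambda> s j l) + (\<Sum>j<N. t j j * moment_gen N \<Gamma> \<Lambda> s j j)"

locale coupling_matrix =
  fixes N :: nat and \<Gamma> :: "nat \<Rightarrow> nat \<Rightarrow> real"
  assumes sym: "\<And>j l. j < N \<Longrightarrow> l < N \<Longrightarrow> \<Gamma> j l = \<Gamma> l j"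
    and offdiag: "\<And>j l. j < N \<Longrightarrow> l < N \<Longrightarrow> j \<noteq> l \<Longrightarrow> 0 \<le> \<Gamma> j l"
    and diag: "\<And>j. j < N \<Longrightarrow> \<Gamma> j j = - (\<Sum>l\<in>{0..<N} - {j}. \<Gamma> j l)"
begin

lemma Theta_diag:
  assumes j: "j < N"
  shows "Theta N \<Gamma> S (j, j) = (\<Sum>m<N. \<Gamma> j m * sv S m j + sv S j m * \<Gamma> m j)"
proof -
  define R where "R = {0..<N} - {j}"
  have "Theta N \<Gamma> S (j, j) = (\<Sum>m\<in>R. \<Gamma> j m * (sv S j m - sv S j j) + \<Gamma> j m * (sv S m j - sv S j j))"
    unfolding Theta_def R_def by simp
  also have "\<dots> = (\<Sum>m\<in>R. 2 * (\<Gamma> j m * sv S j m) - 2 * sv S j j * \<Gamma> j m)"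
  proof (rule sum.cong[OF refl])
    fix m
    show "\<Gamma> j m * (sv S j m - sv S j j) + \<Gamma> j m * (sv S m j - sv S j j)
        = 2 * (\<Gamma> j m * sv S j m) - 2 * sv S j j * \<Gamma> j m"
      unfolding sv_sym[of S m j] by (simp add: algebra_simps)
  qed
  also have "\<dots> = (\<Sum>m\<in>R. 2 * (\<Gamma> j m * sv S j m)) - 2 * sv S j j * (\<Sum>m\<in>R. \<Gamma> j m)"
    by (simp add: sum_subtractf sum_distrib_left)
  also have "\<dots> = 2 * (\<Gamma> j j * sv S j j) + (\<Sum>m\<in>R. 2 * (\<Gamma> j m * sv S j m))"
    using diag[OF j] unfolding R_def by simp
  also have "\<dots> = (\<Sum>m\<in>insert j R. 2 * (\<Gamma> j m * sv S j m))"
    by (subst sum.insert) (auto simp: R_def)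
  also have "\<dots> = (\<Sum>m<N. \<Gamma> j m * sv S m j + sv S j m * \<Gamma> m j)"
  proof (rule sum.cong)
    show "insert j R = {..<N}"
      using j unfolding R_def by auto
    fix m assume "m \<in> {..<N}"
    then show "2 * (\<Gamma> j m * sv S j m) = \<Gamma> j m * sv S m j + sv S j m * \<Gamma> m j"
      unfolding sv_sym[of S m j] using sym[OF j, of m] by simp
  qed
  finally show ?thesis .
qed

lemma Theta_offdiag:
  assumes j: "j < N" and l: "l < N" and "j \<noteq> l"
  shows "Theta N \<Gamma> S (j, l) = (\<Sum>m<N. \<Gamma> j m * sv S m l + sv S j m * \<Gamma> m l)
     + \<Gamma> j l * (sv S j j + sv S l l - 2 * sv S j l)"
proof -
  define R where "R = {0..<N} - {j, l}"
  have R: "finite R" "j \<notin> R" "l \<notin> R"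
    unfolding R_def by auto
  have dj: "\<Gamma> j j = - (\<Gamma> j l + (\<Sum>m\<in>R. \<Gamma> j m))"
  proof -
    have "{0..<N} - {j} = insert l R"
      unfolding R_def using l \<open>j \<noteq> l\<close> by auto
    then show ?thesis
      using diag[OF j] R by simp
  qed
  have dl: "\<Gamma> l l = - (\<Gamma> j l + (\<Sum>m\<in>R. \<Gamma> l m))"
  proof -
    have "{0..<N} - {l} = insert j R"
      unfolding R_def using j \<open>j \<noteq> l\<close> by auto
    then show ?thesis
      using diag[OF l] R sym[OF j l] by simp
  qed
  have full: "(\<Sum>m<N. \<Gamma> j m * sv S m l + sv S j m * \<Gamma> m l)
     = (\<Gamma> j j * sv S j l + sv S j j * \<Gamma> j l) + (\<Gamma> j l * sv S l l + sv S j l * \<Gamma> l l)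
       + (\<Sum>m\<in>R. \<Gamma> j m * sv S m l + \<Gamma> l m * sv S j m)"
  proof -
    have "{..<N} = insert j (insert l R)"
      unfolding R_def using j l by auto
    moreover have "(\<Sum>m\<in>R. \<Gamma> j m * sv S m l + sv S j m * \<Gamma> m l) = (\<Sum>m\<in>R. \<Gamma> j m * sv S m l + \<Gamma> l m * sv S j m)"
      using sym l unfolding R_def by (intro sum.cong refl) auto
    ultimately show ?thesis
      using R \<open>j \<noteq> l\<close> sym[OF j l] by simp
  qed
  have "Theta N \<Gamma> S (j, l) = 2 * \<Gamma> j l * (sv S j j + sv S l l - 2 * sv S j l)
      + (\<Sum>m\<in>R. \<Gamma> l m * (sv S j m - sv S j l) + \<Gamma> j m * (sv S m l - sv S j l))"
    using \<open>j \<noteq> l\<close> by (simp add: Theta_def R_def)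
  then show ?thesis
    unfolding full dj dl by (simp add: sum.distrib sum_subtractf sum_distrib_left algebra_simps)
qed

lemma ThetaPsi_eq_moment_gen:
  assumes "j < N" "l < N"
  shows "ThetaPsi N \<Gamma> \<Lambda> S (j, l) = moment_gen N \<Gamma> \<Lambda> (sv S) j l"
  using assms Theta_diag[of j S] Theta_offdiag[of j l S]
  by (cases "j = l") (simp_all add: ThetaPsi_def Psi_def moment_gen_def)

lemma moment_gen_sym:
  assumes "\<And>x y. x < N \<Longrightarrow> y < N \<Longrightarrow> t x y = t y x" and "j < N" "l < N"
  shows "moment_gen N \<Gamma> \<Lambda> t j l = moment_gen N \<Gamma> \<Lambda> t l j"
proof -
  have "(\<Sum>m<N. \<Gamma> j m * t m l + t j m * \<Gamma> m l) = (\<Sum>m<N. \<Gamma> l m * t m j + t l m * \<Gamma> m j)"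
    using assms sym by (intro sum.cong refl) auto
  then show ?thesis
    unfolding moment_gen_def using assms sym by (simp add: algebra_simps)
qed

lemma sum3_swap_outer: "(\<Sum>j<N. \<Sum>l<N. \<Sum>m<N. f j l m) = (\<Sum>m<N. \<Sum>l<N. \<Sum>j<N. (f j l m :: real))"
proof -
  have "(\<Sum>j<N. \<Sum>l<N. \<Sum>m<N. f j l m) = (\<Sum>j<N. \<Sum>m<N. \<Sum>l<N. f j l m)"
    by (rule sum.cong[OF refl], rule sum.swap)
  also have "\<dots> = (\<Sum>m<N. \<Sum>j<N. \<Sum>l<N. f j l m)"
    by (rule sum.swap)
  also have "\<dots> = (\<Sum>m<N. \<Sum>l<N. \<Sum>j<N. f j l m)"
    by (rule sum.cong[OF refl], rule sum.swap)
  finally show ?thesis .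
qed

lemma moment_form_expand:
  assumes s: "\<And>x y. x < N \<Longrightarrow> y < N \<Longrightarrow> s x y = s y x"
    and t: "\<And>x y. x < N \<Longrightarrow> y < N \<Longrightarrow> t x y = t y x"
  shows "moment_form N \<Gamma> \<Lambda> t s
    = 2 * (\<Sum>j<N. \<Sum>l<N. \<Sum>m<N. t j l * \<Gamma> j m * s m l)
      + 2 * (\<Sum>j<N. \<Sum>l<N. \<Gamma> j l * t j l * s j j) + 2 * (\<Sum>j<N. \<Sum>l<N. \<Gamma> j l * s j l * t j j)
      - 2 * (\<Sum>j<N. \<Sum>l<N. \<Gamma> j l * t j l * s j l)
      - (\<Sum>j<N. \<Sum>l<N. (\<Lambda> j + \<Lambda> l) * t j l * s j l) - (\<Sum>j<N. 2 * \<Lambda> j * t j j * s j j)"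
proof -
  have right: "(\<Sum>j<N. \<Sum>l<N. \<Sum>m<N. t j l * (s j m * \<Gamma> m l))
      = (\<Sum>j<N. \<Sum>l<N. \<Sum>m<N. t j l * \<Gamma> j m * s m l)"
    by (subst sum.swap) (use s t sym in \<open>auto intro!: sum.cong simp: mult_ac\<close>)
  have ll: "(\<Sum>j<N. \<Sum>l<N. t j l * (\<Gamma> j l * s l l)) = (\<Sum>j<N. \<Sum>l<N. \<Gamma> j l * t j l * s j j)"
    by (subst sum.swap) (use t sym in \<open>auto intro!: sum.cong simp: mult_ac\<close>)
  have "t j j * moment_gen N \<Gamma> \<Lambda> s j j = 2 * (\<Sum>l<N. \<Gamma> j l * s j l * t j j) - 2 * \<Lambda> j * t j j * s j j"
    if "j < N" for j
  proof -
    have "(\<Sum>m<N. \<Gamma> j m * s m j + s j m * \<Gamma> m j) = (\<Sum>m<N. 2 * (\<Gamma> j m * s j m))"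
      using s sym that by (intro sum.cong refl) auto
    then show ?thesis
      unfolding moment_gen_def by (simp add: sum_distrib_left sum_distrib_right algebra_simps)
  qed
  then have diag: "(\<Sum>j<N. t j j * moment_gen N \<Gamma> \<Lambda> s j j)
      = 2 * (\<Sum>j<N. \<Sum>l<N. \<Gamma> j l * s j l * t j j) - (\<Sum>j<N. 2 * \<Lambda> j * t j j * s j j)"
    by (simp add: sum_subtractf sum_distrib_left)
  have "(\<Sum>j<N. \<Sum>l<N. t j l * moment_gen N \<Gamma> \<Lambda> s j l)
      = (\<Sum>j<N. \<Sum>l<N. \<Sum>m<N. t j l * \<Gamma> j m * s m l) + (\<Sum>j<N. \<Sum>l<N. \<Sum>m<N. t j l * (s j m * \<Gamma> m l))
        + (\<Sum>j<N. \<Sum>l<N. \<Gamma> j l * t j l * s j j) + (\<Sum>j<N. \<Sum>l<N. t j l * (\<Gamma> j l * s l l))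
        - 2 * (\<Sum>j<N. \<Sum>l<N. \<Gamma> j l * t j l * s j l) - (\<Sum>j<N. \<Sum>l<N. (\<Lambda> j + \<Lambda> l) * t j l * s j l)"
    unfolding moment_gen_def
    by (simp add: sum.distrib sum_subtractf sum_distrib_left algebra_simps)
  then show ?thesis
    unfolding moment_form_def right ll diag by simp
qed

lemma moment_form_sym:
  assumes s: "\<And>x y. x < N \<Longrightarrow> y < N \<Longrightarrow> s x y = s y x"
    and t: "\<And>x y. x < N \<Longrightarrow> y < N \<Longrightarrow> t x y = t y x"
  shows "moment_form N \<Gamma> \<Lambda> t s = moment_form N \<Gamma> \<Lambda> s t"
proof -
  have "(\<Sum>j<N. \<Sum>l<N. \<Sum>m<N. t j l * \<Gamma> j m * s m l) = (\<Sum>j<N. \<Sum>l<N. \<Sum>m<N. s j l * \<Gamma> j m * t m l)"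
    by (subst sum3_swap_outer) (use s t sym in \<open>auto intro!: sum.cong simp: mult_ac\<close>)
  with moment_form_expand[where s = s and t = t, OF s t] moment_form_expand[where s = t and t = s, OF t s]
  show ?thesis
    by (simp add: mult_ac)
qed

lemma ThetaPsi_pairing_sym:
  "(\<Sum>p\<in>TN N. T p * ThetaPsi N \<Gamma> \<Lambda> S p) = (\<Sum>p\<in>TN N. S p * ThetaPsi N \<Gamma> \<Lambda> T p)"
proof -
  have pairing: "2 * (\<Sum>p\<in>TN N. T p * ThetaPsi N \<Gamma> \<Lambda> S p) = moment_form N \<Gamma> \<Lambda> (sv T) (sv S)" for S T
  proof -
    have "(\<Sum>p\<in>TN N. T p * ThetaPsi N \<Gamma> \<Lambda> S p)
        = (\<Sum>p\<in>TN N. sv T (fst p) (snd p) * moment_gen N \<Gamma> \<Lambda> (sv S) (fst p) (snd p))"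
      by (intro sum.cong refl) (auto simp: TN_def sv_TN[of _ N T] ThetaPsi_eq_moment_gen)
    moreover have "2 * (\<Sum>p\<in>TN N. sv T (fst p) (snd p) * moment_gen N \<Gamma> \<Lambda> (sv S) (fst p) (snd p))
        = moment_form N \<Gamma> \<Lambda> (sv T) (sv S)"
      unfolding moment_form_def
    proof (rule sum_TN_sym)
      fix j l assume "j < N" "l < N"
      then show "sv T j l * moment_gen N \<Gamma> \<Lambda> (sv S) j l = sv T l j * moment_gen N \<Gamma> \<Lambda> (sv S) l j"
        using moment_gen_sym[of "sv S" j l \<Lambda>] sv_sym[of T j l] sv_sym[of S] by simp
    qed
    ultimately show ?thesis
      by simp
  qed
  have "moment_form N \<Gamma> \<Lambda> (sv T) (sv S) = moment_form N \<Gamma> \<Lambda> (sv S) (sv T)"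
    by (rule moment_form_sym) (simp_all add: sv_sym)
  then show ?thesis
    using pairing[of S T] pairing[of T S] by simp
qed

lemma moment_matrix_sym: "sym_mat (length (tn_list N)) (moment_matrix N \<Gamma> \<Lambda>)"
  unfolding sym_mat_def moment_matrix_def
proof (intro allI impI)
  fix i k assume i: "i < length (tn_list N)" and k: "k < length (tn_list N)"
  have eval: "ThetaPsi N \<Gamma> \<Lambda> S (tn_list N ! r) = (\<Sum>p\<in>TN N. TN_basis (tn_list N ! r) p * ThetaPsi N \<Gamma> \<Lambda> S p)"
    if "r < length (tn_list N)" for S r
    using that by (simp add: TN_basis_def nth_tn_list_in_TN if_distrib[of "\<lambda>x. x * _"] sum.delta' cong: if_cong)
  show "ThetaPsi N \<Gamma> \<Lambda> (TN_basis (tn_list N ! k)) (tn_list N ! i)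
      = ThetaPsi N \<Gamma> \<Lambda> (TN_basis (tn_list N ! i)) (tn_list N ! k)"
    unfolding eval[OF i] eval[OF k] by (rule ThetaPsi_pairing_sym)
qed

lemma Theta_lower_bounds:
  assumes nonneg: "\<And>q. 0 \<le> S q" and "j < N" "l < N" and zero: "sv S j l = 0"
  shows "0 \<le> Theta N \<Gamma> S (j, l)"
    and "\<And>m. m < N \<Longrightarrow> m \<noteq> j \<Longrightarrow> m \<noteq> l \<Longrightarrow> \<Gamma> l m * sv S j m \<le> Theta N \<Gamma> S (j, l)"
    and "j \<noteq> l \<Longrightarrow> 2 * \<Gamma> j l * (sv S j j + sv S l l) \<le> Theta N \<Gamma> S (j, l)"
proof -
  define R where "R = {0..<N} - {j, l}"
  define f where "f m = \<Gamma> l m * sv S j m + \<Gamma> j m * sv S m l" for m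
  define A where "A = 2 * \<Gamma> j l * (if j \<noteq> l then 1 else 0) * (sv S j j + sv S l l)"
  have sv_nonneg: "0 \<le> sv S x y" for x y
    using nonneg by (simp add: sv_def)
  have Theta: "Theta N \<Gamma> S (j, l) = A + sum f R"
    unfolding Theta_def A_def f_def R_def using zero by simp
  have f_nonneg: "0 \<le> f m" if "m \<in> R" for m
    using that offdiag[of l m] offdiag[of j m] \<open>j < N\<close> \<open>l < N\<close> sv_nonneg
    by (auto simp: f_def R_def)
  have A_nonneg: "0 \<le> A"
    using offdiag[of j l] \<open>j < N\<close> \<open>l < N\<close> sv_nonneg by (auto simp: A_def)
  show "0 \<le> Theta N \<Gamma> S (j, l)"
    unfolding Theta using A_nonneg f_nonneg by (simp add: sum_nonneg)
  show "\<Gamma> l m * sv S j m \<le> Theta N \<Gamma> S (j, l)" if "m < N" "m \<noteq> j" "m \<noteq> l" for m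
  proof -
    have "m \<in> R"
      using that by (simp add: R_def)
    have "\<Gamma> l m * sv S j m \<le> f m"
      using offdiag[of j m] \<open>j < N\<close> that sv_nonneg by (simp add: f_def)
    also have "\<dots> \<le> sum f R"
      using f_nonneg \<open>m \<in> R\<close> by (intro member_le_sum) (auto simp: R_def)
    finally show ?thesis
      unfolding Theta using A_nonneg by simp
  qed
  show "2 * \<Gamma> j l * (sv S j j + sv S l l) \<le> Theta N \<Gamma> S (j, l)" if "j \<noteq> l"
    unfolding Theta using that f_nonneg by (simp add: A_def sum_nonneg)
qed

lemma ThetaPsi_spair:
  assumes "x < N" "y < N"
  shows "ThetaPsi N \<Gamma> \<Lambda> S (spair x y) = ThetaPsi N \<Gamma> \<Lambda> S (x, y)"
  using assms ThetaPsi_eq_moment_gen moment_gen_sym[of "sv S" x y] sv_sym[of S]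
  by (cases "x \<le> y") (auto simp: spair_def min_def max_def)

lemma ThetaPsi_basis_nonneg:
  assumes "p \<in> TN N" "q \<in> TN N" "p \<noteq> q"
  shows "0 \<le> ThetaPsi N \<Gamma> \<Lambda> (TN_basis q) p"
proof -
  obtain j l where p: "p = (j, l)" "j \<le> l" "l < N"
    using assms(1) unfolding TN_def by auto
  then have "sv (TN_basis q) j l = 0"
    using assms(3) by (simp add: sv_def TN_basis_def)
  then show ?thesis
    using Theta_lower_bounds(1)[of "TN_basis q" j l] p by (simp add: ThetaPsi_def Psi_def TN_basis_def)
qed

lemma ThetaPsi_basis_pos:
  assumes "x < N" "y < N" "m < N" "m \<noteq> y" and edge: "0 < \<Gamma> y m"
  shows "0 < ThetaPsi N \<Gamma> \<Lambda> (TN_basis (spair x m)) (spair x y)"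
proof -
  let ?S = "TN_basis (spair x m)"
  have zero: "sv ?S x y = 0"
    using \<open>m \<noteq> y\<close> by (simp add: sv_eq_spair TN_basis_def spair_eq_iff_left)
  have nonneg: "\<And>q. 0 \<le> ?S q"
    by (simp add: TN_basis_def)
  have "0 < Theta N \<Gamma> ?S (x, y)"
  proof (cases "m = x")
    case True
    then have "0 < 2 * \<Gamma> x y * (sv ?S x x + sv ?S y y)"
      using edge sym[of y m] assms by (simp add: sv_eq_spair TN_basis_def add_pos_nonneg)
    with True show ?thesis
      using Theta_lower_bounds(3)[OF nonneg assms(1,2) zero] assms by simp
  next
    case False
    then have "0 < \<Gamma> y m * sv ?S x m"
      using edge by (simp add: sv_eq_spair TN_basis_def)
    with False show ?thesis
      using Theta_lower_bounds(2)[OF nonneg assms(1,2) zero, of m] assms by simp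
  qed
  then show ?thesis
    unfolding ThetaPsi_spair[OF assms(1,2)] using zero by (simp add: ThetaPsi_def Psi_def)
qed

lemma moment_matrix_nonneg:
  assumes "i < length (tn_list N)" "k < length (tn_list N)" "i \<noteq> k"
  shows "0 \<le> moment_matrix N \<Gamma> \<Lambda> i k"
  unfolding moment_matrix_def using assms
  by (intro ThetaPsi_basis_nonneg) (simp_all add: nth_tn_list_in_TN nth_tn_list_eq_iff)

lemma moment_matrix_edge:
  assumes "x < N" "y < N" "m < N" "m \<noteq> y" "0 < \<Gamma> y m"
  shows "(TN_index N (spair x y), TN_index N (spair x m)) \<in> support_graph (length (tn_list N)) (moment_matrix N \<Gamma> \<Lambda>)"
proof -
  have TN: "spair x y \<in> TN N" "spair x m \<in> TN N"
    using assms by (simp_all add: spair_in_TN)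
  moreover have "TN_index N (spair x y) \<noteq> TN_index N (spair x m)"
    using nth_TN_index[OF TN(1)] nth_TN_index[OF TN(2)] assms(4) spair_eq_iff_left by metis
  ultimately show ?thesis
    using ThetaPsi_basis_pos[OF assms, of \<Lambda>]
    unfolding support_graph_def moment_matrix_def by (simp add: TN_index_less)
qed

lemma moment_matrix_path:
  assumes "(y, m) \<in> (support_graph N \<Gamma>)\<^sup>*" "x < N" "y < N"
  shows "(TN_index N (spair x y), TN_index N (spair x m)) \<in> (support_graph (length (tn_list N)) (moment_matrix N \<Gamma> \<Lambda>))\<^sup>*"
  using assms(1)
proof (induction rule: rtrancl_induct)
  case (step m' m)
  then have "m' < N" "m < N" "m \<noteq> m'" "0 < \<Gamma> m' m"
    unfolding support_graph_def by auto
  then show ?case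
    using rtrancl_into_rtrancl[OF step.IH moment_matrix_edge[OF \<open>x < N\<close>, of m' m \<Lambda>]] by blast
qed simp

lemma moment_matrix_irreducible_metzler:
  assumes "irreducible_Gamma N \<Gamma>"
  shows "irreducible_metzler (length (tn_list N)) (moment_matrix N \<Gamma> \<Lambda>)"
proof
  fix i k assume i: "i < length (tn_list N)" and k: "k < length (tn_list N)"
  show "i \<noteq> k \<Longrightarrow> 0 \<le> moment_matrix N \<Gamma> \<Lambda> i k"
    by (rule moment_matrix_nonneg[OF i k])
  have connected: "(a, b) \<in> (support_graph N \<Gamma>)\<^sup>*" if "a < N" "b < N" for a b
    using assms that unfolding irreducible_Gamma_def support_graph_def by blast
  have spair_nth: "tn_list N ! r = spair (fst (tn_list N ! r)) (snd (tn_list N ! r))"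
    and "fst (tn_list N ! r) < N" "snd (tn_list N ! r) < N" if "r < length (tn_list N)" for r
    using nth_tn_list_in_TN[OF that] by (auto simp: spair_TN TN_def)
  then obtain j l j' l' where p: "tn_list N ! i = spair j l" "j < N" "l < N"
    and q: "tn_list N ! k = spair j' l'" "j' < N" "l' < N"
    using i k by metis
  have "(TN_index N (spair j l), TN_index N (spair j j')) \<in> (support_graph (length (tn_list N)) (moment_matrix N \<Gamma> \<Lambda>))\<^sup>*"
    using moment_matrix_path[OF connected] p q by blast
  moreover have "(TN_index N (spair j' j), TN_index N (spair j' l')) \<in> (support_graph (length (tn_list N)) (moment_matrix N \<Gamma> \<Lambda>))\<^sup>*"
    using moment_matrix_path[OF connected] p q by blast
  ultimately show "(i, k) \<in> (support_graph (length (tn_list N)) (moment_matrix N \<Gamma> \<Lambda>))\<^sup>*"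
    using TN_index_nth[OF i] TN_index_nth[OF k] p(1) q(1) spair_sym[of j j'] by simp
qed

end

lemma ThetaPsi_eigen_iff:
  "(\<forall>p\<in>TN N. ThetaPsi N \<Gamma> \<Lambda> W p = l * W p)
     \<longleftrightarrow> (\<forall>i<length (tn_list N). mapply (length (tn_list N)) (moment_matrix N \<Gamma> \<Lambda>) (\<lambda>k. W (tn_list N ! k)) i
            = l * W (tn_list N ! i))"
proof
  assume "\<forall>p\<in>TN N. ThetaPsi N \<Gamma> \<Lambda> W p = l * W p"
  then show "\<forall>i<length (tn_list N). mapply (length (tn_list N)) (moment_matrix N \<Gamma> \<Lambda>) (\<lambda>k. W (tn_list N ! k)) i
      = l * W (tn_list N ! i)"
    by (simp add: ThetaPsi_nth[symmetric] nth_tn_list_in_TN)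
next
  assume eig: "\<forall>i<length (tn_list N). mapply (length (tn_list N)) (moment_matrix N \<Gamma> \<Lambda>) (\<lambda>k. W (tn_list N ! k)) i
      = l * W (tn_list N ! i)"
  show "\<forall>p\<in>TN N. ThetaPsi N \<Gamma> \<Lambda> W p = l * W p"
  proof
    fix p assume "p \<in> TN N"
    then obtain i where "i < length (tn_list N)" "p = tn_list N ! i"
      by (rule TN_obtain_index)
    then show "ThetaPsi N \<Gamma> \<Lambda> W p = l * W p"
      using eig by (simp add: ThetaPsi_nth)
  qed
qed

locale moment_spectrum =
  dominant_eigenbasis "length (tn_list N)" "moment_matrix N \<Gamma> \<Lambda>" U d k0
  for N :: nat and \<Gamma> :: "nat \<Rightarrow> nat \<Rightarrow> real" and \<Lambda> :: "nat \<Rightarrow> real"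
    and U :: "nat \<Rightarrow> nat \<Rightarrow> real" and d :: "nat \<Rightarrow> real" and k0 :: nat
begin

lemma perron_vector_exists:
  "\<exists>W. (\<forall>p\<in>TN N. ThetaPsi N \<Gamma> \<Lambda> W p = d k0 * W p) \<and> (\<forall>p\<in>TN N. 0 < W p) \<and> (\<Sum>p\<in>TN N. (W p)\<^sup>2) = 1"
proof (intro exI conjI)
  let ?W = "\<lambda>p. U (TN_index N p) k0"
  show "\<forall>p\<in>TN N. ThetaPsi N \<Gamma> \<Lambda> ?W p = d k0 * ?W p"
    unfolding ThetaPsi_eigen_iff
  proof (intro allI impI)
    fix i assume "i < length (tn_list N)"
    have "mapply (length (tn_list N)) (moment_matrix N \<Gamma> \<Lambda>) (\<lambda>k. ?W (tn_list N ! k)) i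
        = mapply (length (tn_list N)) (moment_matrix N \<Gamma> \<Lambda>) (\<lambda>k. U k k0) i"
      unfolding mapply_def by (intro sum.cong) simp_all
    then show "mapply (length (tn_list N)) (moment_matrix N \<Gamma> \<Lambda>) (\<lambda>k. ?W (tn_list N ! k)) i
        = d k0 * ?W (tn_list N ! i)"
      using col_eigen[OF \<open>i < length (tn_list N)\<close> k0] \<open>i < length (tn_list N)\<close> by simp
  qed
  show "\<forall>p\<in>TN N. 0 < ?W p"
    by (simp add: positive TN_index_less)
  show "(\<Sum>p\<in>TN N. (?W p)\<^sup>2) = 1"
    unfolding sum_TN_reindex by (simp add: col_unit k0)
qed

lemma perron_vector_unique:
  assumes "\<forall>p\<in>TN N. ThetaPsi N \<Gamma> \<Lambda> W p = d k0 * W p" "\<forall>p\<in>TN N. 0 < W p" "(\<Sum>p\<in>TN N. (W p)\<^sup>2) = 1"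
    and "i < length (tn_list N)"
  shows "W (tn_list N ! i) = U i k0"
proof -
  have "\<And>i. i < length (tn_list N) \<Longrightarrow>
      mapply (length (tn_list N)) (moment_matrix N \<Gamma> \<Lambda>) (\<lambda>k. W (tn_list N ! k)) i = d k0 * W (tn_list N ! i)"
    using assms(1) unfolding ThetaPsi_eigen_iff by blast
  moreover have "\<And>i. i < length (tn_list N) \<Longrightarrow> 0 < W (tn_list N ! i)"
    using assms(2) nth_tn_list_in_TN by blast
  moreover have "(\<Sum>k<length (tn_list N). (W (tn_list N ! k))\<^sup>2) = 1"
    using assms(3) unfolding sum_TN_reindex .
  ultimately show ?thesis
    by (rule positive_unit_eigenvector_eq[OF _ _ _ assms(4)])
qed

lemma moment_asymptotics:
  assumes W: "\<forall>p\<in>TN N. ThetaPsi N \<Gamma> \<Lambda> W p = d k0 * W p" "\<forall>p\<in>TN N. 0 < W p" "(\<Sum>p\<in>TN N. (W p)\<^sup>2) = 1"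
    and S0: "\<forall>p\<in>TN N. 0 \<le> S0 p" "\<exists>p\<in>TN N. S0 p \<noteq> 0"
  shows "0 < (\<Sum>p\<in>TN N. W p * S0 p)"
    and "i < length (tn_list N) \<Longrightarrow>
      ((\<lambda>z. mexp_apply (ThetaPsi_mat N \<Gamma> \<Lambda>) z (vec_of_TN N S0) $ i
         / ((\<Sum>p\<in>TN N. W p * S0 p) * W (tn_list N ! i) * exp (d k0 * z))) \<longlongrightarrow> 1) at_top"
proof -
  let ?v = "\<lambda>k. S0 (tn_list N ! k)"
  have cW: "(\<Sum>p\<in>TN N. W p * S0 p) = coord ?v k0"
    unfolding sum_TN_reindex coord_def
    by (intro sum.cong refl) (simp add: perron_vector_unique[OF W] mult.commute)
  obtain p where p: "p \<in> TN N" "S0 p \<noteq> 0"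
    using S0(2) by blast
  have "0 < W p * S0 p"
    using W(2) S0(1) p by (simp add: less_le)
  moreover have "\<forall>q\<in>TN N. 0 \<le> W q * S0 q"
    using W(2) S0(1) by (simp add: less_imp_le)
  ultimately show pos: "0 < (\<Sum>p\<in>TN N. W p * S0 p)"
    using p(1) by (intro sum_pos2[of _ p]) auto
  assume i: "i < length (tn_list N)"
  have "((\<lambda>z. mexp_apply (mat_of (length (tn_list N)) (moment_matrix N \<Gamma> \<Lambda>)) z (vec (length (tn_list N)) ?v) $ i
         / (coord ?v k0 * U i k0 * exp (d k0 * z))) \<longlongrightarrow> 1) at_top"
    using mexp_apply_asymptotics[OF i] pos cW by simp
  then show "((\<lambda>z. mexp_apply (ThetaPsi_mat N \<Gamma> \<Lambda>) z (vec_of_TN N S0) $ i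
         / ((\<Sum>p\<in>TN N. W p * S0 p) * W (tn_list N ! i) * exp (d k0 * z))) \<longlongrightarrow> 1) at_top"
    unfolding ThetaPsi_mat_eq vec_of_TN_def cW perron_vector_unique[OF W i] .
qed

end

theorem mainTheorem5:
  fixes N :: nat and \<Gamma> :: "nat \<Rightarrow> nat \<Rightarrow> real" and \<Lambda> :: "nat \<Rightarrow> real"
  assumes N2: "N \<ge> 2"
    and sym: "\<And>j l. j < N \<Longrightarrow> l < N \<Longrightarrow> \<Gamma> j l = \<Gamma> l j"
    and offdiag: "\<And>j l. j < N \<Longrightarrow> l < N \<Longrightarrow> j \<noteq> l \<Longrightarrow> \<Gamma> j l \<ge> 0"
    and diag: "\<And>j. j < N \<Longrightarrow> \<Gamma> j j = - (\<Sum>l \<in> {0..<N} - {j}. \<Gamma> j l)"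
    and Lpos: "\<And>j. j < N \<Longrightarrow> \<Lambda> j \<ge> 0"
    and irr: "irreducible_Gamma N \<Gamma>"
  shows "\<exists>\<mu> :: real.
     eigenvalue (ThetaPsi_mat N \<Gamma> \<Lambda>) (- \<mu>)
   \<and> (\<forall>ev :: complex. eigenvalue (map_mat complex_of_real (ThetaPsi_mat N \<Gamma> \<Lambda>)) ev \<longrightarrow> Re ev \<le> - \<mu>)
   \<and> order (- \<mu>) (char_poly (ThetaPsi_mat N \<Gamma> \<Lambda>)) = 1
   \<and> (\<exists>W :: nat \<times> nat \<Rightarrow> real.
        (\<forall>p \<in> TN N. ThetaPsi N \<Gamma> \<Lambda> W p = - \<mu> * W p) \<and> (\<forall>p \<in> TN N. W p > 0)
        \<and> (\<Sum>p \<in> TN N. (W p)\<^sup>2) = 1)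
   \<and> (\<forall>W :: nat \<times> nat \<Rightarrow> real.
        (\<forall>p \<in> TN N. ThetaPsi N \<Gamma> \<Lambda> W p = - \<mu> * W p) \<and> (\<forall>p \<in> TN N. W p > 0)
        \<and> (\<Sum>p \<in> TN N. (W p)\<^sup>2) = 1 \<longrightarrow>
        (\<forall>S0 :: nat \<times> nat \<Rightarrow> real.
           (\<forall>p \<in> TN N. S0 p \<ge> 0) \<and> (\<exists>p \<in> TN N. S0 p \<noteq> 0) \<longrightarrow>
           (let cW = (\<Sum>p \<in> TN N. W p * S0 p);
                S = (\<lambda>z. mexp_apply (ThetaPsi_mat N \<Gamma> \<Lambda>) z (vec_of_TN N S0))
            in cW > 0 \<and>
               (\<forall>i < length (tn_list N).
                  ((\<lambda>z. (S z $ i) / (cW * W (tn_list N ! i) * exp (- \<mu> * z))) \<longlongrightarrow> 1) at_top)))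
        \<and> (\<forall>q :: nat \<Rightarrow> real.
           (\<forall>j < N. q j \<ge> 0) \<and> (\<exists>j < N. q j \<noteq> 0) \<longrightarrow>
           (\<Sum>p \<in> TN N. W p * ((2 - (if fst p = snd p then 1 else 0)) * q (fst p) * q (snd p)))
             = (\<Sum>j < N. \<Sum>l < N. sv W j l * q j * q l)))"
proof -
  interpret coupling_matrix N \<Gamma>
    using sym offdiag diag by unfold_locales
  have "(0, 0) \<in> set (tn_list N)"
    using N2 by (simp add: set_tn_list TN_def)
  then have "0 < length (tn_list N)"
    by (cases "tn_list N") auto
  then obtain U d k0 where "dominant_eigenbasis (length (tn_list N)) (moment_matrix N \<Gamma> \<Lambda>) U d k0"
    using perron_frobenius_symmetric moment_matrix_sym moment_matrix_irreducible_metzler[OF irr] by blast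
  then interpret moment_spectrum N \<Gamma> \<Lambda> U d k0
    by (rule moment_spectrum.intro)
  show ?thesis
  proof (intro exI[of _ "- d k0"] conjI allI impI)
    show "eigenvalue (ThetaPsi_mat N \<Gamma> \<Lambda>) (- (- d k0))"
      using eigenvalue_dominant by (simp add: ThetaPsi_mat_eq)
    show "Re ev \<le> - (- d k0)" if "eigenvalue (map_mat complex_of_real (ThetaPsi_mat N \<Gamma> \<Lambda>)) ev" for ev
      using complex_eigenvalue_le that by (simp add: ThetaPsi_mat_eq)
    show "order (- (- d k0)) (char_poly (ThetaPsi_mat N \<Gamma> \<Lambda>)) = 1"
      using order_dominant by (simp add: ThetaPsi_mat_eq)
  qed (use perron_vector_exists moment_asymptotics sum_TN_second_moments in \<open>auto simp: Let_def\<close>)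
qed

end
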